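(* Let $\gamma$ be a translation-invariant (nonnull) specification, $\nu\in\mathcal G_{\mathrm{inv}}(\gamma)$ and $\mu,\lambda\in\mathcal M^+_{1,\mathrm{inv}}$, and assume Condition C1': $(\lambda\otimes\mu)\big(\{(\xi,\sigma):\sigma^\xi\in\Omega_\gamma\}\big)=1$. Then: (1) $h(\mu|\nu)$ exists if and only if $e^\lambda_\nu$ exists, and in that case $$h(\mu|\nu)=-h(\mu)+e^\lambda_\nu-\int_{\Omega\times\Omega}\log\frac{\gamma_0(\sigma^\xi|\sigma^\xi)}{\gamma_0(\xi|\sigma^\xi)}\,\mu(d\sigma)\,\lambda(d\xi).$$ (2) If moreover $\mu\in\mathcal G_{\mathrm{inv}}(\gamma)$ and $e^\lambda_\nu$ exists, then $$h(\mu|\nu)=\lim_{n\to\infty}\frac1{|\Lambda_n|}\int_\Omega\log\frac{d\mu_{\Lambda_n}}{d\nu_{\Lambda_n}}(\xi_{\Lambda_n})\,\lambda(d\xi).$$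
   Context: Let $E$ be a finite set, $\Omega=E^{\mathbb Z^d}$ with product topology and Borel $\sigma$-field $\mathcal F$; $\mathcal F_\Lambda$ is generated by the coordinates in $\Lambda$; $\mathcal S$ = finite subsets of $\mathbb Z^d$; $\mu(\sigma_\Lambda)=\mu(\{\omega:\omega_\Lambda=\sigma_\Lambda\})$ and $\mu_\Lambda$ is the law of $\omega_\Lambda$ under $\mu$; local functions are $\mathcal F_\Delta$-measurable for some finite $\Delta$. Translations $(\tau_x\omega)(y)=\omega(x+y)$; $\mathcal M^+_{1,\mathrm{inv}}$ = translation-invariant probability measures. A specification $\gamma=(\gamma_\Lambda)_{\Lambda\in\mathcal S}$ is a family of probability kernels, $\mathcal F_{\Lambda^c}$-measurable in the boundary condition, proper, consistent ($\int\gamma_\Lambda(A|\omega')\gamma_{\Lambda'}(d\omega'|\omega)=\gamma_{\Lambda'}(A|\omega)$ for $\Lambda\subset\Lambda'$ and all $\omega$) and nonnull ($0<a_\Lambda<\inf_{\sigma,\eta}\gamma_\Lambda(\sigma_\Lambda|\eta)\le\sup_{\sigma,\eta}\gamma_\Lambda(\sigma_\Lambda|\eta)<b_\Lambda<1$); translation-invariant means $\gamma_{\Lambda+x}(A|\omega)=\gamma_\Lambda(\tau_xA|\tau_x\omega)$. $\mathcal G(\gamma)$: probability measures $\mu$ with $\mu(A|\mathcal F_{\Lambda^c})=\gamma_\Lambda(A|\cdot)$ $\mu$-a.s. for all $\Lambda,A$; $\mathcal G_{\mathrm{inv}}(\gamma)=\mathcal G(\gamma)\cap\mathcal M^+_{1,\mathrm{inv}}$.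 $\Omega_\gamma$ is the set of $\omega$ at which $\omega'\mapsto\int f\,d\gamma_\Lambda(\cdot|\omega')$ is continuous for all $\Lambda\in\mathcal S$ and local $f$. For $\sigma,\xi\in\Omega$ and the lexicographic order $\le$ on $\mathbb Z^d$, define $\sigma^\xi(x)=\sigma(x)$ if $x\le0$ and $\sigma^\xi(x)=\xi(x)$ if $x>0$. $\gamma_0(\zeta|\omega)$ denotes $\gamma_{\{0\}}(\{\omega':\omega'(0)=\zeta(0)\}|\omega)$. $\Lambda_n=[-n,n]^d\cap\mathbb Z^d$. $e^\lambda_\nu=-\lim_{n\to\infty}|\Lambda_n|^{-1}\int_\Omega\log\nu(\xi_{\Lambda_n})\,\lambda(d\xi)$ whenever the limit exists. $h_\Lambda(\mu|\nu)=\sum_{\sigma_\Lambda}\mu(\sigma_\Lambda)\log\frac{\mu(\sigma_\Lambda)}{\nu(\sigma_\Lambda)}$, $h(\mu|\nu)=\lim_n|\Lambda_n|^{-1}h_{\Lambda_n}(\mu|\nu)$ when it exists, and $h(\mu)=-\lim_n|\Lambda_n|^{-1}\sum_{\sigma_{\Lambda_n}}\mu(\sigma_{\Lambda_n})\log\mu(\sigma_{\Lambda_n})$ is the Kolmogorov–Sinai entropy. *)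

theory Defs
  imports "HOL-Probability.Probability"
begin

text \<open>Sites are vectors in int^'d (the finite type 'd plays the role of the
coordinate index set {1..d}); the single-site space is a finite type 'e.
Configurations are functions int^'d => 'e.\<close>

definition Omega :: "(int^'d \<Rightarrow> 'e) measure" where
  "Omega = PiM UNIV (\<lambda>_. count_space UNIV)"

definition Fsig :: "(int^'d) set \<Rightarrow> (int^'d \<Rightarrow> 'e) measure" where
  "Fsig S = vimage_algebra UNIV (\<lambda>\<omega>. restrict \<omega> S) (PiM S (\<lambda>_. count_space UNIV))"

definition prod_top :: "(int^'d \<Rightarrow> 'e) topology" where
  "prod_top = product_topology (\<lambda>_. discrete_topology UNIV) UNIV"

definition cyl :: "(int^'d) set \<Rightarrow> (int^'d \<Rightarrow> 'e) \<Rightarrow> (int^'d \<Rightarrow> 'e) set" where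
  "cyl \<Lambda> s = {\<omega>. \<forall>x\<in>\<Lambda>. \<omega> x = s x}"

definition configs :: "(int^'d) set \<Rightarrow> (int^'d \<Rightarrow> 'e) set" where
  "configs \<Lambda> = PiE \<Lambda> (\<lambda>_. UNIV)"

definition shift :: "int^'d \<Rightarrow> (int^'d \<Rightarrow> 'e) \<Rightarrow> (int^'d \<Rightarrow> 'e)" where
  "shift x \<omega> = (\<lambda>y. \<omega> (x + y))"

definition prob_on_Omega :: "(int^'d \<Rightarrow> 'e) measure \<Rightarrow> bool" where
  "prob_on_Omega \<mu> \<longleftrightarrow> prob_space \<mu> \<and> sets \<mu> = sets Omega"

definition inv_measure :: "(int^'d \<Rightarrow> 'e) measure \<Rightarrow> bool" where
  "inv_measure \<mu> \<longleftrightarrow> prob_on_Omega \<mu> \<and> (\<forall>x. distr \<mu> Omega (shift x) = \<mu>)"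

definition is_specification ::
  "((int^'d) set \<Rightarrow> (int^'d \<Rightarrow> 'e) \<Rightarrow> (int^'d \<Rightarrow> 'e) measure) \<Rightarrow> bool" where
  "is_specification \<gamma> \<longleftrightarrow>
    (\<forall>\<Lambda> \<omega>. finite \<Lambda> \<and> \<Lambda> \<noteq> {} \<longrightarrow> prob_on_Omega (\<gamma> \<Lambda> \<omega>)) \<and>
    (\<forall>\<Lambda> A. finite \<Lambda> \<and> \<Lambda> \<noteq> {} \<and> A \<in> sets Omega \<longrightarrow>
        (\<lambda>\<omega>. measure (\<gamma> \<Lambda> \<omega>) A) \<in> borel_measurable (Fsig (- \<Lambda>))) \<and>
    (\<forall>\<Lambda> B \<omega>. finite \<Lambda> \<and> \<Lambda> \<noteq> {} \<and> B \<in> sets (Fsig (- \<Lambda>)) \<longrightarrow>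
        measure (\<gamma> \<Lambda> \<omega>) B = indicator B \<omega>) \<and>
    (\<forall>\<Lambda> \<Lambda>' A \<omega>. finite \<Lambda>' \<and> \<Lambda> \<noteq> {} \<and> \<Lambda> \<subseteq> \<Lambda>' \<and> A \<in> sets Omega \<longrightarrow>
        (\<integral>\<omega>'. measure (\<gamma> \<Lambda> \<omega>') A \<partial>(\<gamma> \<Lambda>' \<omega>)) = measure (\<gamma> \<Lambda>' \<omega>) A)"

definition nonnull_spec ::
  "((int^'d) set \<Rightarrow> (int^'d \<Rightarrow> 'e) \<Rightarrow> (int^'d \<Rightarrow> 'e) measure) \<Rightarrow> bool" where
  "nonnull_spec \<gamma> \<longleftrightarrow>
    (\<forall>\<Lambda>. finite \<Lambda> \<and> \<Lambda> \<noteq> {} \<longrightarrow>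
      (\<exists>a b. 0 < a \<and> b < 1 \<and>
        a < (INF p. measure (\<gamma> \<Lambda> (snd p)) (cyl \<Lambda> (fst p))) \<and>
        (SUP p. measure (\<gamma> \<Lambda> (snd p)) (cyl \<Lambda> (fst p))) < b))"

definition trans_inv_spec ::
  "((int^'d) set \<Rightarrow> (int^'d \<Rightarrow> 'e) \<Rightarrow> (int^'d \<Rightarrow> 'e) measure) \<Rightarrow> bool" where
  "trans_inv_spec \<gamma> \<longleftrightarrow>
    (\<forall>\<Lambda> x A \<omega>. finite \<Lambda> \<and> \<Lambda> \<noteq> {} \<and> A \<in> sets Omega \<longrightarrow>
      measure (\<gamma> ((\<lambda>y. y + x) ` \<Lambda>) \<omega>) A = measure (\<gamma> \<Lambda> (shift x \<omega>)) (shift x ` A))"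

definition gibbs ::
  "((int^'d) set \<Rightarrow> (int^'d \<Rightarrow> 'e) \<Rightarrow> (int^'d \<Rightarrow> 'e) measure) \<Rightarrow> (int^'d \<Rightarrow> 'e) measure \<Rightarrow> bool" where
  "gibbs \<gamma> \<mu> \<longleftrightarrow> prob_on_Omega \<mu> \<and>
    (\<forall>\<Lambda> A. finite \<Lambda> \<and> \<Lambda> \<noteq> {} \<and> A \<in> sets Omega \<longrightarrow>
      (AE \<omega> in \<mu>. real_cond_exp \<mu> (Fsig (- \<Lambda>)) (indicator A) \<omega> = measure (\<gamma> \<Lambda> \<omega>) A))"

definition local_fun :: "((int^'d \<Rightarrow> 'e) \<Rightarrow> real) \<Rightarrow> bool" where
  "local_fun f \<longleftrightarrow> (\<exists>\<Delta>. finite \<Delta> \<and> f \<in> borel_measurable (Fsig \<Delta>))"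

definition Omega_gamma ::
  "((int^'d) set \<Rightarrow> (int^'d \<Rightarrow> 'e) \<Rightarrow> (int^'d \<Rightarrow> 'e) measure) \<Rightarrow> (int^'d \<Rightarrow> 'e) set" where
  "Omega_gamma \<gamma> = {\<omega>. \<forall>\<Lambda> f. finite \<Lambda> \<and> \<Lambda> \<noteq> {} \<and> local_fun f \<longrightarrow>
      limitin euclideanreal (\<lambda>\<omega>'. \<integral>z. f z \<partial>(\<gamma> \<Lambda> \<omega>')) (\<integral>z. f z \<partial>(\<gamma> \<Lambda> \<omega>)) (atin prod_top \<omega>)}"

definition lex_le :: "int^('d::{finite,linorder}) \<Rightarrow> int^('d::{finite,linorder}) \<Rightarrow> bool" where
  "lex_le x y \<longleftrightarrow> x = y \<or> (\<exists>i. x$i < y$i \<and> (\<forall>j<i. x$j = y$j))"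

definition glue :: "(int^('d::{finite,linorder}) \<Rightarrow> 'e) \<Rightarrow> (int^('d::{finite,linorder}) \<Rightarrow> 'e) \<Rightarrow> (int^('d::{finite,linorder}) \<Rightarrow> 'e)" where
  "glue \<sigma> \<xi> = (\<lambda>x. if lex_le x 0 then \<sigma> x else \<xi> x)"

definition gamma0 ::
  "((int^'d) set \<Rightarrow> (int^'d \<Rightarrow> 'e) \<Rightarrow> (int^'d \<Rightarrow> 'e) measure) \<Rightarrow> (int^'d \<Rightarrow> 'e) \<Rightarrow> (int^'d \<Rightarrow> 'e) \<Rightarrow> real" where
  "gamma0 \<gamma> \<zeta> \<omega> = measure (\<gamma> {0} \<omega>) {\<omega>'. \<omega>' 0 = \<zeta> 0}"

definition Lam :: "nat \<Rightarrow> (int^'d) set" where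
  "Lam n = {x. \<forall>i. - int n \<le> x$i \<and> x$i \<le> int n}"

definition hLam :: "(int^'d) set \<Rightarrow> (int^'d \<Rightarrow> 'e) measure \<Rightarrow> (int^'d \<Rightarrow> 'e) measure \<Rightarrow> real" where
  "hLam \<Lambda> \<mu> \<nu> = (\<Sum>s\<in>configs \<Lambda>.
      measure \<mu> (cyl \<Lambda> s) * ln (measure \<mu> (cyl \<Lambda> s) / measure \<nu> (cyl \<Lambda> s)))"

definition rel_entropy_seq :: "(int^'d \<Rightarrow> 'e) measure \<Rightarrow> (int^'d \<Rightarrow> 'e) measure \<Rightarrow> nat \<Rightarrow> real" where
  "rel_entropy_seq \<mu> \<nu> n = hLam (Lam n) \<mu> \<nu> / real (card (Lam n :: (int^'d) set))"

text \<open>h(mu|nu) (meaningful when the sequence converges)\<close>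
definition rel_entropy :: "(int^'d \<Rightarrow> 'e) measure \<Rightarrow> (int^'d \<Rightarrow> 'e) measure \<Rightarrow> real" where
  "rel_entropy \<mu> \<nu> = lim (rel_entropy_seq \<mu> \<nu>)"

definition energy_seq :: "(int^'d \<Rightarrow> 'e) measure \<Rightarrow> (int^'d \<Rightarrow> 'e) measure \<Rightarrow> nat \<Rightarrow> real" where
  "energy_seq lam \<nu> n = - ((\<integral>\<xi>. ln (measure \<nu> (cyl (Lam n) \<xi>)) \<partial>lam) / real (card (Lam n :: (int^'d) set)))"

text \<open>e^lambda_nu (meaningful when the sequence converges)\<close>
definition energy :: "(int^'d \<Rightarrow> 'e) measure \<Rightarrow> (int^'d \<Rightarrow> 'e) measure \<Rightarrow> real" where
  "energy lam \<nu> = lim (energy_seq lam \<nu>)"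

definition ks_entropy :: "(int^'d \<Rightarrow> 'e) measure \<Rightarrow> real" where
  "ks_entropy \<mu> = - lim (\<lambda>n. (\<Sum>s\<in>configs (Lam n).
      measure \<mu> (cyl (Lam n) s) * ln (measure \<mu> (cyl (Lam n) s))) / real (card (Lam n :: (int^'d) set)))"

end

theory Submission
  imports Defs
begin

text \<open>
  Write \<open>h\<^sub>\<Lambda>(\<mu>|\<nu>) = - H\<^sub>\<mu>(\<Lambda>) - \<integral> ln \<nu>(\<sigma>\<^sub>\<Lambda>) \<mu>(d\<sigma>)\<close>. Since the block entropy
  \<open>H\<^sub>\<mu>\<close> is subadditive and translation invariant, \<open>H\<^sub>\<mu>(\<Lambda>\<^sub>n) / |\<Lambda>\<^sub>n|\<close> converges to the
  Kolmogorov-Sinai entropy, so everything hinges on the difference of the energy integrals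
  against \<open>\<mu>\<close> and \<open>\<lambda>\<close>. Changing \<open>\<xi>\<close> into \<open>\<sigma>\<close> one site at a time, in lexicographic
  order, makes \<open>ln \<nu>(\<sigma>\<^sub>\<Lambda>) - ln \<nu>(\<xi>\<^sub>\<Lambda>)\<close> telescope into a sum over \<open>x \<in> \<Lambda>\<close> of
  log-ratios of cylinder probabilities that differ only at \<open>x\<close>. Translated to the origin, such
  a ratio tends to \<open>ln (\<gamma>\<^sub>0(\<sigma>\<^sup>\<xi>|\<sigma>\<^sup>\<xi>) / \<gamma>\<^sub>0(\<xi>|\<sigma>\<^sup>\<xi>))\<close> as the cylinder grows,
  whenever \<open>\<sigma>\<^sup>\<xi> \<in> \<Omega>\<^sub>\<gamma>\<close> (Gibbs property of \<open>\<nu>\<close> plus continuity of \<open>\<gamma>\<close> there), and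
  nonnullness bounds it uniformly. Translation invariance of \<open>\<lambda> \<otimes> \<mu>\<close>, dominated convergence
  under Condition C1', and the fact that all but a vanishing fraction of the sites of \<open>\<Lambda>\<^sub>n\<close>
  are far from its boundary then show that the averaged energy difference converges to the
  boundary integral. Part (2) is part (1) with \<open>\<nu>\<close> replaced by \<open>\<mu>\<close>, as \<open>h(\<mu>|\<mu>) = 0\<close>.
\<close>

section \<open>Configurations and cylinders\<close>

lemma space_Omega [simp]: "space Omega = UNIV"
  by (auto simp: Omega_def space_PiM PiE_def extensional_def)

lemma measurable_Omega_coord: "(\<lambda>\<omega>. \<omega> x) \<in> measurable Omega (count_space UNIV)"
  unfolding Omega_def by (rule measurable_component_singleton) simp

lemma measurable_into_Omega:
  assumes "\<And>x. (\<lambda>p. f p x) \<in> measurable N (count_space UNIV)"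
  shows "f \<in> measurable N Omega"
proof -
  have "(\<lambda>p i. f p i) \<in> measurable N (PiM UNIV (\<lambda>_. count_space UNIV))"
    by (rule measurable_PiM_single') (auto simp: assms PiE_def extensional_def)
  then show ?thesis unfolding Omega_def by simp
qed

lemma cyl_cong: "(\<And>x. x \<in> \<Lambda> \<Longrightarrow> \<eta> x = \<eta>' x) \<Longrightarrow> cyl \<Lambda> \<eta> = cyl \<Lambda> \<eta>'"
  by (auto simp: cyl_def)

lemma cyl_in_sets:
  assumes "space M = UNIV" and "finite \<Lambda>"
    and "\<And>x. x \<in> \<Lambda> \<Longrightarrow> (\<lambda>\<omega>. \<omega> x) \<in> measurable M (count_space UNIV)"
  shows "cyl \<Lambda> s \<in> sets M"
proof -
  have "cyl \<Lambda> s = (\<Inter>x\<in>\<Lambda>. (\<lambda>\<omega>. \<omega> x) -` {s x} \<inter> space M)"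
    using assms(1) by (auto simp: cyl_def)
  also have "\<dots> \<in> sets M"
    using assms sets.top[of M]
    by (intro sets.countable_INT'' countable_finite measurable_sets[where A="count_space UNIV"]) auto
  finally show ?thesis .
qed

lemma cyl_in_sets_Omega [measurable]: "finite \<Lambda> \<Longrightarrow> cyl \<Lambda> s \<in> sets Omega"
  by (rule cyl_in_sets) (auto simp: measurable_Omega_coord)

lemma space_Fsig [simp]: "space (Fsig T) = UNIV"
  by (simp add: Fsig_def)

lemma restrict_in_space_PiM: "(\<lambda>\<omega>. restrict \<omega> T) \<in> UNIV \<rightarrow> space (PiM T (\<lambda>_. count_space UNIV))"
  by (auto simp: space_PiM)

lemma measurable_Fsig_coord:
  assumes "x \<in> T"
  shows "(\<lambda>\<omega>. \<omega> x) \<in> measurable (Fsig T) (count_space UNIV)"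
proof -
  have "(\<lambda>\<omega>. restrict \<omega> T x) \<in> measurable (Fsig T) (count_space UNIV)"
    unfolding Fsig_def
    by (rule measurable_compose[OF measurable_vimage_algebra1[OF restrict_in_space_PiM]])
       (rule measurable_component_singleton[OF assms])
  then show ?thesis using assms by simp
qed

lemma cyl_in_sets_Fsig: "finite S \<Longrightarrow> S \<subseteq> T \<Longrightarrow> cyl S s \<in> sets (Fsig T)"
  by (rule cyl_in_sets) (auto intro: measurable_Fsig_coord)

lemma sets_Fsig:
  "sets (Fsig T) = {(\<lambda>\<omega>. restrict \<omega> T) -` B | B. B \<in> sets (PiM T (\<lambda>_. count_space UNIV))}"
  unfolding Fsig_def by (simp add: sets_vimage_algebra2[OF restrict_in_space_PiM])

lemma sets_Fsig_subset: "sets (Fsig T) \<subseteq> sets Omega"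
proof
  fix A assume "A \<in> sets (Fsig T)"
  then obtain B where B: "B \<in> sets (PiM T (\<lambda>_. count_space UNIV))"
    and A: "A = (\<lambda>\<omega>. restrict \<omega> T) -` B \<inter> space Omega"
    unfolding sets_Fsig by auto
  have "(\<lambda>\<omega>. restrict \<omega> T) \<in> measurable Omega (PiM T (\<lambda>_. count_space UNIV))"
    unfolding Omega_def by (rule measurable_restrict_subset) simp
  from measurable_sets[OF this B] show "A \<in> sets Omega" unfolding A .
qed

lemma subalgebra_Fsig: "sets M = sets Omega \<Longrightarrow> subalgebra M (Fsig T)"
  unfolding subalgebra_def using sets_Fsig_subset
  by (metis sets_eq_imp_space_eq space_Fsig space_Omega)

lemma measurable_Fsig_imp_Omega: "f \<in> measurable (Fsig T) N \<Longrightarrow> f \<in> measurable Omega N"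
  by (rule measurable_from_subalg[OF subalgebra_Fsig]) simp

lemma borel_measurable_Fsig_eq:
  fixes f :: "_ \<Rightarrow> real"
  assumes f: "f \<in> borel_measurable (Fsig T)" and eq: "\<forall>x\<in>T. \<omega> x = \<omega>' x"
  shows "f \<omega> = f \<omega>'"
proof -
  have "f -` {f \<omega>} \<inter> space (Fsig T) \<in> sets (Fsig T)"
    by (rule measurable_sets[OF f]) simp
  then obtain B where B: "f -` {f \<omega>} = (\<lambda>\<omega>. restrict \<omega> T) -` B"
    unfolding sets_Fsig by auto
  have "restrict \<omega> T = restrict \<omega>' T" using eq by (auto simp: restrict_def)
  then have "\<omega>' \<in> f -` {f \<omega>}" unfolding B by (metis B vimageE vimageI singletonI)
  then show ?thesis by simp
qed

lemma finite_configs: "finite \<Lambda> \<Longrightarrow> finite (configs \<Lambda> :: (int^'d \<Rightarrow> 'e::finite) set)"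
  unfolding configs_def by (rule finite_PiE) auto

lemma vimage_restrict_eq_cyl: "s \<in> configs \<Lambda> \<Longrightarrow> (\<lambda>\<omega>. restrict \<omega> \<Lambda>) -` {s} = cyl \<Lambda> s"
  unfolding configs_def cyl_def by (auto simp: restrict_def PiE_def extensional_def fun_eq_iff)

lemma measurable_restrict_configs:
  assumes "finite \<Lambda>"
  shows "(\<lambda>\<omega>. restrict \<omega> \<Lambda>) \<in> measurable Omega (count_space (configs \<Lambda> :: (int^'d \<Rightarrow> 'e::finite) set))"
proof -
  have "countable (configs \<Lambda> :: (int^'d \<Rightarrow> 'e) set)"
    using finite_configs[OF assms] by (rule countable_finite)
  moreover have "(\<lambda>\<omega>. restrict \<omega> \<Lambda>) -` {s} \<inter> space Omega \<in> sets (Omega :: (int^'d \<Rightarrow> 'e) measure)"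
    if "s \<in> configs \<Lambda>" for s
    using vimage_restrict_eq_cyl[OF that] cyl_in_sets_Omega[OF assms] by simp
  moreover have "(\<lambda>\<omega>. restrict \<omega> \<Lambda>) \<in> space Omega \<rightarrow> (configs \<Lambda> :: (int^'d \<Rightarrow> 'e) set)"
    by (auto simp: configs_def)
  ultimately show ?thesis by (simp add: measurable_count_space_eq_countable)
qed

lemma measurable_Omega_local:
  fixes f :: "(int^'d \<Rightarrow> 'e::finite) \<Rightarrow> 'b"
  assumes "finite \<Delta>" and agree: "\<And>\<omega> \<omega>'. \<forall>x\<in>\<Delta>. \<omega> x = \<omega>' x \<Longrightarrow> f \<omega> = f \<omega>'"
    and "space N = UNIV"
  shows "f \<in> measurable Omega N"
proof -
  define g where "g s = f (\<lambda>y. if y \<in> \<Delta> then s y else undefined)" for s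
  have "(\<lambda>\<omega>. g (restrict \<omega> \<Delta>)) \<in> measurable Omega N"
    by (rule measurable_compose[OF measurable_restrict_configs[OF assms(1)]]) (simp add: assms(3))
  moreover have "g (restrict \<omega> \<Delta>) = f \<omega>" for \<omega>
    unfolding g_def by (rule agree) auto
  ultimately show ?thesis by simp
qed

lemma borel_measurable_Omega_local:
  fixes f :: "(int^'d \<Rightarrow> 'e::finite) \<Rightarrow> real"
  assumes "finite \<Delta>" and "\<And>\<omega> \<omega>'. \<forall>x\<in>\<Delta>. \<omega> x = \<omega>' x \<Longrightarrow> f \<omega> = f \<omega>'"
  shows "f \<in> borel_measurable Omega"
  using assms by (rule measurable_Omega_local) simp_all

lemma borel_measurable_pair_local:
  fixes f :: "(int^'d \<Rightarrow> 'e::finite) \<times> (int^'d \<Rightarrow> 'e) \<Rightarrow> real"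
  assumes fin: "finite \<Delta>"
    and agree: "\<And>p p'. \<forall>x\<in>\<Delta>. fst p x = fst p' x \<and> snd p x = snd p' x \<Longrightarrow> f p = f p'"
  shows "f \<in> borel_measurable (Omega \<Otimes>\<^sub>M Omega)"
proof -
  define C where "C = (configs \<Delta> :: (int^'d \<Rightarrow> 'e) set)"
  have "countable C" unfolding C_def using finite_configs[OF fin] by (rule countable_finite)
  define ext where "ext s = (\<lambda>y. if y \<in> \<Delta> then s y else undefined)" for s :: "int^'d \<Rightarrow> 'e"
  define g where "g = (\<lambda>(s, t). f (ext s, ext t))"
  have "(\<lambda>p. (restrict (fst p) \<Delta>, restrict (snd p) \<Delta>))
      \<in> measurable (Omega \<Otimes>\<^sub>M Omega) (count_space C \<Otimes>\<^sub>M count_space C)"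
    unfolding C_def using measurable_restrict_configs[OF fin] by measurable
  then have "(\<lambda>p. g (restrict (fst p) \<Delta>, restrict (snd p) \<Delta>)) \<in> borel_measurable (Omega \<Otimes>\<^sub>M Omega)"
    by (rule measurable_compose) (simp add: pair_measure_countable[OF \<open>countable C\<close> \<open>countable C\<close>])
  moreover have "g (restrict (fst p) \<Delta>, restrict (snd p) \<Delta>) = f p" for p
    unfolding g_def by simp (rule agree, simp add: ext_def)
  ultimately show ?thesis by simp
qed

lemma bounded_if_local:
  fixes f :: "(int^'d \<Rightarrow> 'e::finite) \<Rightarrow> real"
  assumes "finite \<Lambda>" and agree: "\<And>\<omega> \<omega>'. \<forall>x\<in>\<Lambda>. \<omega> x = \<omega>' x \<Longrightarrow> f \<omega> = f \<omega>'"
  obtains B where "\<And>\<omega>. \<bar>f \<omega>\<bar> \<le> B"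
proof
  fix \<omega>
  have "f \<omega> = f (restrict \<omega> \<Lambda>)" by (rule agree) simp
  moreover have "restrict \<omega> \<Lambda> \<in> configs \<Lambda>" by (simp add: configs_def)
  ultimately show "\<bar>f \<omega>\<bar> \<le> Max ((\<lambda>s. \<bar>f s\<bar>) ` configs \<Lambda>)"
    using finite_configs[OF assms(1), where 'e='e] by (intro Max_ge) auto
qed

lemma measurable_shift: "shift x \<in> measurable Omega Omega"
  unfolding shift_def by (rule measurable_into_Omega) (rule measurable_Omega_coord)

lemma space_prob_on_Omega: "prob_on_Omega \<mu> \<Longrightarrow> space \<mu> = UNIV"
  unfolding prob_on_Omega_def by (metis sets_eq_imp_space_eq space_Omega)

lemma prob_space_prob_on_Omega: "prob_on_Omega \<mu> \<Longrightarrow> prob_space \<mu>"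
  unfolding prob_on_Omega_def by simp

lemma measurable_prob_on_Omega: "prob_on_Omega \<mu> \<Longrightarrow> f \<in> measurable Omega N \<Longrightarrow> f \<in> measurable \<mu> N"
  unfolding prob_on_Omega_def using measurable_cong_sets by blast

lemma integrable_bounded_prob_on_Omega:
  fixes f :: "_ \<Rightarrow> real"
  assumes "prob_on_Omega \<mu>" and "f \<in> borel_measurable Omega" and "\<And>\<omega>. \<bar>f \<omega>\<bar> \<le> B"
  shows "integrable \<mu> f"
proof -
  interpret prob_space \<mu> using assms(1) by (rule prob_space_prob_on_Omega)
  show ?thesis
  proof (rule integrable_const_bound[where B=B])
    show "AE x in \<mu>. norm (f x) \<le> B" using assms(3) by simp
    show "f \<in> borel_measurable \<mu>" using assms(1,2) by (rule measurable_prob_on_Omega)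
  qed
qed

lemma integral_local_eq_sum:
  fixes f :: "(int^'d \<Rightarrow> 'e::finite) \<Rightarrow> real"
  assumes "prob_on_Omega \<mu>" and "finite \<Lambda>"
    and agree: "\<And>\<omega> \<omega>'. \<forall>x\<in>\<Lambda>. \<omega> x = \<omega>' x \<Longrightarrow> f \<omega> = f \<omega>'"
  shows "(\<integral>\<omega>. f \<omega> \<partial>\<mu>) = (\<Sum>s\<in>configs \<Lambda>. measure \<mu> (cyl \<Lambda> s) * f s)"
proof -
  interpret prob_space \<mu> using assms(1) by (rule prob_space_prob_on_Omega)
  have sets: "cyl \<Lambda> s \<in> sets \<mu>" for s using assms(1,2) by (simp add: prob_on_Omega_def)
  have pointwise: "f \<omega> = (\<Sum>s\<in>configs \<Lambda>. indicator (cyl \<Lambda> s) \<omega> * f s)" for \<omega>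
  proof -
    have "indicator (cyl \<Lambda> s) \<omega> * f s = (if s = restrict \<omega> \<Lambda> then f s else 0)"
      if "s \<in> configs \<Lambda>" for s
      using vimage_restrict_eq_cyl[OF that] by (auto simp: indicator_def)
    then have "(\<Sum>s\<in>configs \<Lambda>. indicator (cyl \<Lambda> s) \<omega> * f s)
        = (\<Sum>s\<in>configs \<Lambda>. if s = restrict \<omega> \<Lambda> then f s else 0)"
      by (rule sum.cong[OF refl])
    also have "\<dots> = f (restrict \<omega> \<Lambda>)"
      using finite_configs[OF assms(2), where 'e='e] by (simp add: sum.delta' configs_def)
    also have "\<dots> = f \<omega>" by (rule agree) simp
    finally show ?thesis by simp
  qed
  have "(\<integral>\<omega>. f \<omega> \<partial>\<mu>) = (\<integral>\<omega>. (\<Sum>s\<in>configs \<Lambda>. indicator (cyl \<Lambda> s) \<omega> * f s) \<partial>\<mu>)"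
    by (simp only: pointwise[symmetric])
  also have "\<dots> = (\<Sum>s\<in>configs \<Lambda>. \<integral>\<omega>. indicator (cyl \<Lambda> s) \<omega> * f s \<partial>\<mu>)"
    using sets by (intro Bochner_Integration.integral_sum integrable_mult_left integrable_real_indicator)
      (auto simp: emeasure_eq_measure)
  also have "\<dots> = (\<Sum>s\<in>configs \<Lambda>. measure \<mu> (cyl \<Lambda> s) * f s)"
    using sets by (simp add: sets.Int_space_eq2)
  finally show ?thesis .
qed

lemma topspace_prod_top [simp]: "topspace prod_top = UNIV"
  by (simp add: prod_top_def)

lemma limitin_prod_top_imp_local:
  fixes F :: "(int^'d \<Rightarrow> 'e) \<Rightarrow> real"
  assumes lim: "limitin euclideanreal F (F \<eta>) (atin prod_top \<eta>)" and e: "\<epsilon> > 0"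
  shows "\<exists>K. finite K \<and> (\<forall>\<omega>. (\<forall>x\<in>K. \<omega> x = \<eta> x) \<longrightarrow> \<bar>F \<omega> - F \<eta>\<bar> < \<epsilon>)"
proof -
  have "openin euclideanreal (ball (F \<eta>) \<epsilon>)" "F \<eta> \<in> ball (F \<eta>) \<epsilon>"
    using e by auto
  then have "eventually (\<lambda>\<omega>. F \<omega> \<in> ball (F \<eta>) \<epsilon>) (atin prod_top \<eta>)"
    using lim unfolding limitin_def by blast
  then obtain V where V: "openin prod_top V" "\<eta> \<in> V" "\<And>\<omega>. \<omega> \<in> V - {\<eta>} \<Longrightarrow> F \<omega> \<in> ball (F \<eta>) \<epsilon>"
    unfolding eventually_atin by auto
  then obtain W where W: "finite {i. W i \<noteq> UNIV}" "\<eta> \<in> PiE UNIV W" "PiE UNIV W \<subseteq> V"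
    unfolding prod_top_def openin_product_topology_alt by auto
  have "\<bar>F \<omega> - F \<eta>\<bar> < \<epsilon>" if "\<forall>x\<in>{i. W i \<noteq> UNIV}. \<omega> x = \<eta> x" for \<omega>
  proof (cases "\<omega> = \<eta>")
    case False
    have "\<omega> i \<in> W i" for i
      using that W(2) by (cases "W i = UNIV") (auto simp: PiE_def Pi_def)
    then have "\<omega> \<in> V" using W(3) by (auto simp: PiE_def extensional_def)
    then have "F \<omega> \<in> ball (F \<eta>) \<epsilon>" using V(3) False by blast
    then show ?thesis by (simp add: dist_real_def abs_minus_commute)
  qed (use e in simp)
  then show ?thesis using W(1) by blast
qed

section \<open>Boxes\<close>

lemma card_Lam: "card (Lam n :: (int^'d) set) = (2 * n + 1) ^ CARD('d)"
proof -
  have "bij_betw (\<lambda>x. \<lambda>i. x $ i) (Lam n :: (int^'d) set) (PiE UNIV (\<lambda>_. {- int n..int n}))"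
  proof (rule bij_betwI[where g=vec_lambda])
    show "(\<lambda>x. \<lambda>i. x $ i) \<in> Lam n \<rightarrow> PiE UNIV (\<lambda>_. {- int n..int n})"
      by (auto simp: Lam_def)
    show "vec_lambda \<in> PiE UNIV (\<lambda>_. {- int n..int n}) \<rightarrow> Lam n"
      by (auto simp: Lam_def PiE_def)
  qed (auto simp: PiE_def extensional_def)
  then have "card (Lam n :: (int^'d) set) = card (PiE (UNIV::'d set) (\<lambda>_. {- int n..int n}))"
    by (rule bij_betw_same_card)
  also have "\<dots> = (2 * n + 1) ^ CARD('d)"
    by (simp add: card_PiE nat_add_distrib nat_mult_distrib)
  finally show ?thesis .
qed

lemma card_Lam_real: "real (card (Lam n :: (int^'d) set)) = (2 * real n + 1) ^ CARD('d)"
  unfolding card_Lam by (simp add: add.commute)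

lemma card_Lam_pos: "card (Lam n :: (int^'d) set) > 0"
  by (simp add: card_Lam)

lemma finite_Lam [simp]: "finite (Lam n :: (int^'d) set)"
  using card_Lam_pos card.infinite by (metis less_irrefl)

lemma zero_in_Lam [simp]: "0 \<in> Lam n"
  by (simp add: Lam_def)

lemma Lam_mono: "m \<le> n \<Longrightarrow> Lam m \<subseteq> Lam n"
  unfolding Lam_def by (intro Collect_mono impI allI) (smt (verit) of_nat_le_iff)

lemma finite_subset_Lam:
  assumes "finite (K :: (int^'d) set)"
  shows "\<exists>N. K \<subseteq> Lam N"
proof -
  define N where "N = Max (insert 0 ((\<lambda>(x, i). nat \<bar>x $ i\<bar>) ` (K \<times> UNIV)))"
  have bound: "nat \<bar>x $ i\<bar> \<le> N" if "x \<in> K" for x i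
    unfolding N_def using that assms by (intro Max_ge) auto
  have "- int N \<le> x $ i \<and> x $ i \<le> int N" if "x \<in> K" for x i
    using bound[OF that, of i] by (auto simp: nat_le_iff abs_le_iff)
  then have "K \<subseteq> Lam N" by (auto simp: Lam_def)
  then show ?thesis ..
qed

lemma translate_Lam_diff_subset:
  fixes x :: "int^'d"
  assumes "k \<le> n" and "x \<in> Lam (n - k)"
  shows "Lam k \<subseteq> (\<lambda>y. y - x) ` Lam n"
proof
  fix z :: "int^'d" assume "z \<in> Lam k"
  with assms have "- int n \<le> (z + x) $ i \<and> (z + x) $ i \<le> int n" for i
    by (auto simp: Lam_def of_nat_diff) (smt (verit))+
  then have "z + x \<in> Lam n" by (simp add: Lam_def)
  then show "z \<in> (\<lambda>y. y - x) ` Lam n" by (rule rev_image_eqI) simp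
qed

lemma Lam_subset_translates:
  fixes m K n :: nat
  assumes "n \<le> m + (2 * m + 1) * K"
  shows "(Lam n :: (int^'d) set) \<subseteq> (\<Union>k\<in>Lam K. (\<lambda>y. (\<chi> i. (2 * int m + 1) * k $ i) + y) ` Lam m)"
proof
  fix y :: "int^'d" assume y: "y \<in> Lam n"
  define c where "c = 2 * int m + 1"
  define k :: "int^'d" where "k = (\<chi> i. (y $ i + int m) div c)"
  define r :: "int^'d" where "r = (\<chi> i. (y $ i + int m) mod c - int m)"
  have c: "c > 0" by (simp add: c_def)
  have "int n \<le> int (m + (2 * m + 1) * K)" using assms by (simp only: of_nat_le_iff)
  then have n: "int n + 1 \<le> c * (int K + 1) - int m" by (simp add: c_def algebra_simps)
  have bounds: "- int K \<le> k $ i \<and> k $ i \<le> int K \<and> - int m \<le> r $ i \<and> r $ i \<le> int m" for i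
  proof -
    have yi: "- int n \<le> y $ i" "y $ i \<le> int n" using y by (auto simp: Lam_def)
    have qr: "y $ i + int m = c * k $ i + (r $ i + int m)" by (simp add: k_def r_def)
    have r: "0 \<le> r $ i + int m" "r $ i + int m < c" using c by (simp_all add: k_def r_def)
    have "c * (- int K - 1) < c * k $ i" "c * k $ i < c * (int K + 1)"
      using qr r yi n by (simp_all add: algebra_simps c_def)
    then have "- int K \<le> k $ i \<and> k $ i \<le> int K"
      using c by (simp add: mult_less_cancel_left_pos)
    then show ?thesis using r by (simp add: c_def)
  qed
  then have "k \<in> Lam K" "r \<in> Lam m" unfolding Lam_def by auto
  have "y $ i = c * k $ i + r $ i" for i
  proof -
    have kr: "k $ i = (y $ i + int m) div c" "r $ i = (y $ i + int m) mod c - int m"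
      by (simp_all add: k_def r_def)
    show ?thesis unfolding kr using mult_div_mod_eq[of c "y $ i + int m"] by linarith
  qed
  then have "y = (\<chi> i. c * k $ i) + r"
    by (simp add: vec_eq_iff)
  then have "y \<in> (\<lambda>y. (\<chi> i. c * k $ i) + y) ` Lam m"
    using \<open>r \<in> Lam m\<close> by (rule image_eqI)
  then show "y \<in> (\<Union>k\<in>Lam K. (\<lambda>y. (\<chi> i. (2 * int m + 1) * k $ i) + y) ` Lam m)"
    unfolding c_def
    by (rule UN_I[OF \<open>k \<in> Lam K\<close>])
qed

lemma tendsto_box_ratio: "(\<lambda>n::nat. ((2 * real n + C) / (2 * real n + 1)) ^ d) \<longlonglongrightarrow> 1"
proof -
  have "(\<lambda>n::nat. 1 + (C - 1) / (2 * real n + 1)) \<longlonglongrightarrow> 1 + 0"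
    by (intro tendsto_add tendsto_const real_tendsto_divide_at_top
        filterlim_at_top_mono[OF filterlim_real_sequentially]) auto
  moreover have "1 + (C - 1) / (2 * real n + 1) = (2 * real n + C) / (2 * real n + 1)" for n :: nat
    by (simp add: field_simps)
  ultimately have "(\<lambda>n::nat. (2 * real n + C) / (2 * real n + 1)) \<longlonglongrightarrow> 1" by simp
  from tendsto_power[OF this, of d] show ?thesis by simp
qed

lemma tendsto_card_Lam_diff_ratio:
  "(\<lambda>n. real (card (Lam (n - k) :: (int^'d) set)) / real (card (Lam n :: (int^'d) set))) \<longlonglongrightarrow> 1"
proof -
  have "((2 * real n + (1 - 2 * real k)) / (2 * real n + 1)) ^ CARD('d) =
      real (card (Lam (n - k) :: (int^'d) set)) / real (card (Lam n :: (int^'d) set))" if "k \<le> n" for n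
  proof -
    have "2 * real n + (1 - 2 * real k) = 2 * real (n - k) + 1" using that by (simp add: of_nat_diff)
    then show ?thesis by (simp only: card_Lam_real power_divide)
  qed
  then have "eventually (\<lambda>n. ((2 * real n + (1 - 2 * real k)) / (2 * real n + 1)) ^ CARD('d) =
      real (card (Lam (n - k) :: (int^'d) set)) / real (card (Lam n :: (int^'d) set))) sequentially"
    using eventually_ge_at_top[of k] by (rule eventually_mono[rotated])
  with tendsto_box_ratio show ?thesis by (rule Lim_transform_eventually)
qed

lemma average_Lam_le:
  fixes f :: "int^'d \<Rightarrow> real"
  assumes "k \<le> n" and bounded: "\<And>x. x \<in> Lam n \<Longrightarrow> f x \<le> B"
    and interior: "\<And>x. x \<in> Lam (n - k) \<Longrightarrow> f x \<le> \<epsilon>"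
  defines "r \<equiv> real (card (Lam (n - k) :: (int^'d) set)) / card (Lam n :: (int^'d) set)"
  shows "(\<Sum>x\<in>Lam n. f x) / card (Lam n :: (int^'d) set) \<le> r * \<epsilon> + (1 - r) * B"
proof -
  define A where "A = (Lam (n - k) :: (int^'d) set)"
  define N where "N = real (card (Lam n :: (int^'d) set))"
  have sub: "A \<subseteq> Lam n" unfolding A_def using assms(1) by (intro Lam_mono) simp
  have "(\<Sum>x\<in>Lam n. f x) = (\<Sum>x\<in>Lam n - A. f x) + (\<Sum>x\<in>A. f x)"
    by (rule sum.subset_diff[OF sub finite_Lam])
  also have "\<dots> \<le> real (card (Lam n - A)) * B + real (card A) * \<epsilon>"
  proof (rule add_mono)
    show "(\<Sum>x\<in>Lam n - A. f x) \<le> real (card (Lam n - A)) * B"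
      using bounded by (intro sum_bounded_above) auto
    show "(\<Sum>x\<in>A. f x) \<le> real (card A) * \<epsilon>"
      using interior by (intro sum_bounded_above) (auto simp: A_def)
  qed
  also have "real (card (Lam n - A)) = N - real (card A)"
    using card_mono[OF finite_Lam sub]
    by (simp add: N_def card_Diff_subset[OF _ sub] finite_subset[OF sub] of_nat_diff)
  finally have "(\<Sum>x\<in>Lam n. f x) / N \<le> ((N - real (card A)) * B + real (card A) * \<epsilon>) / N"
    by (rule divide_right_mono) (simp add: N_def)
  also have "\<dots> = r * \<epsilon> + (1 - r) * B"
  proof -
    have "0 < N" using card_Lam_pos by (simp add: N_def)
    then show ?thesis by (simp add: r_def A_def[symmetric] N_def[symmetric] field_simps)
  qed
  finally show ?thesis by (simp add: N_def)
qed

lemma tendsto_average_Lam_0: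
  fixes e :: "nat \<Rightarrow> int^'d \<Rightarrow> real"
  assumes nonneg: "\<And>n x. x \<in> Lam n \<Longrightarrow> 0 \<le> e n x" and bounded: "\<And>n x. x \<in> Lam n \<Longrightarrow> e n x \<le> B"
    and interior: "\<And>\<epsilon>. \<epsilon> > 0 \<Longrightarrow> \<exists>k. \<forall>n\<ge>k. \<forall>x\<in>Lam (n - k). e n x \<le> \<epsilon>"
  shows "(\<lambda>n. (\<Sum>x\<in>Lam n. e n x) / card (Lam n :: (int^'d) set)) \<longlonglongrightarrow> 0"
proof (rule order_tendstoI)
  fix y :: real assume "y < 0"
  then show "eventually (\<lambda>n. y < (\<Sum>x\<in>Lam n. e n x) / card (Lam n :: (int^'d) set)) sequentially"
    using nonneg by (intro always_eventually allI) (simp add: sum_nonneg less_le_trans[OF _ divide_nonneg_nonneg])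
next
  fix y :: real assume y: "0 < y"
  obtain k where k: "\<And>n x. k \<le> n \<Longrightarrow> x \<in> Lam (n - k) \<Longrightarrow> e n x \<le> y / 2"
    using interior[of "y / 2"] y by auto
  define r where "r n = real (card (Lam (n - k) :: (int^'d) set)) / card (Lam n :: (int^'d) set)" for n
  have "(\<lambda>n. r n * (y / 2) + (1 - r n) * B) \<longlonglongrightarrow> 1 * (y / 2) + (1 - 1) * B"
    unfolding r_def by (intro tendsto_intros tendsto_card_Lam_diff_ratio)
  moreover have "1 * (y / 2) + (1 - 1) * B < y" using y by simp
  ultimately have "eventually (\<lambda>n. r n * (y / 2) + (1 - r n) * B < y) sequentially"
    by (rule order_tendstoD(2))
  moreover have "eventually (\<lambda>n. (\<Sum>x\<in>Lam n. e n x) / card (Lam n :: (int^'d) set)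
      \<le> r n * (y / 2) + (1 - r n) * B) sequentially"
    using eventually_ge_at_top[of k]
    by eventually_elim (unfold r_def, rule average_Lam_le[OF _ bounded k])
  ultimately show "eventually (\<lambda>n. (\<Sum>x\<in>Lam n. e n x) / card (Lam n :: (int^'d) set) < y) sequentially"
    by eventually_elim simp
qed

section \<open>Block entropy and the Kolmogorov-Sinai entropy\<close>

definition discrete_entropy :: "'a measure \<Rightarrow> 'b set \<Rightarrow> ('a \<Rightarrow> 'b) \<Rightarrow> real" where
  "discrete_entropy M V f =
    - (\<Sum>v\<in>V. measure M (f -` {v} \<inter> space M) * ln (measure M (f -` {v} \<inter> space M)))"

lemma measurable_pair_count_space:
  assumes "f \<in> measurable M (count_space V)" and "g \<in> measurable M (count_space W)"
    and "countable V" and "countable W"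
  shows "(\<lambda>\<omega>. (f \<omega>, g \<omega>)) \<in> measurable M (count_space (V \<times> W))"
  using measurable_Pair[OF assms(1,2)] by (simp add: pair_measure_countable[OF assms(3,4)])

lemma mult_ln_marginals_le:
  fixes p P Q :: real
  assumes "0 \<le> p" "p \<le> P" "p \<le> Q"
  shows "p * ln P + p * ln Q + (p - P * Q) \<le> p * ln p"
proof (cases "p = 0")
  case False
  then have pos: "0 < p" "0 < P" "0 < Q" using assms by linarith+
  have "ln (P * Q / p) \<le> P * Q / p - 1"
    using pos by (intro ln_le_minus_one) simp
  then have "p * ln (P * Q / p) \<le> P * Q - p"
    using pos mult_left_mono[of _ _ p] by (simp add: field_simps)
  then show ?thesis using pos by (simp add: ln_mult ln_div algebra_simps)
qed (use assms in simp)

lemma sum_ln_marginals_le: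
  fixes p :: "'a \<Rightarrow> 'b \<Rightarrow> real"
  assumes V: "finite V" and W: "finite W" and p: "\<And>v w. 0 \<le> p v w"
    and P: "\<And>v. v \<in> V \<Longrightarrow> P v = (\<Sum>w\<in>W. p v w)"
    and Q: "\<And>w. w \<in> W \<Longrightarrow> Q w = (\<Sum>v\<in>V. p v w)"
    and total: "(\<Sum>v\<in>V. P v) = 1" "(\<Sum>w\<in>W. Q w) = 1"
  shows "(\<Sum>v\<in>V. P v * ln (P v)) + (\<Sum>w\<in>W. Q w * ln (Q w)) \<le> (\<Sum>(v, w)\<in>V \<times> W. p v w * ln (p v w))"
proof -
  have pointwise: "p v w * ln (P v) + p v w * ln (Q w) + (p v w - P v * Q w) \<le> p v w * ln (p v w)"
    if "v \<in> V" "w \<in> W" for v w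
  proof (rule mult_ln_marginals_le)
    show "p v w \<le> P v" "p v w \<le> Q w"
      unfolding P[OF that(1)] Q[OF that(2)] using that p V W by (auto intro: member_le_sum)
  qed (rule p)
  have "P v * ln (P v) = (\<Sum>w\<in>W. p v w * ln (P v))" if "v \<in> V" for v
    using P[OF that] by (metis sum_distrib_right)
  then have "(\<Sum>v\<in>V. P v * ln (P v)) = (\<Sum>(v, w)\<in>V \<times> W. p v w * ln (P v))"
    by (simp add: sum.cartesian_product[symmetric])
  moreover have "Q w * ln (Q w) = (\<Sum>v\<in>V. p v w * ln (Q w))" if "w \<in> W" for w
    using Q[OF that] by (metis sum_distrib_right)
  then have "(\<Sum>w\<in>W. Q w * ln (Q w)) = (\<Sum>(v, w)\<in>V \<times> W. p v w * ln (Q w))"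
    by (simp add: sum.cartesian_product[symmetric] sum.swap[of _ V W])
  moreover have "(\<Sum>(v, w)\<in>V \<times> W. p v w - P v * Q w) = 0"
  proof -
    have "(\<Sum>(v, w)\<in>V \<times> W. p v w) = (\<Sum>v\<in>V. P v)" by (simp add: P sum.cartesian_product)
    moreover have "(\<Sum>(v, w)\<in>V \<times> W. P v * Q w) = (\<Sum>v\<in>V. P v) * (\<Sum>w\<in>W. Q w)"
      by (simp add: sum_product sum.cartesian_product)
    ultimately show ?thesis using total by (simp add: sum_subtractf case_prod_beta')
  qed
  ultimately have "(\<Sum>v\<in>V. P v * ln (P v)) + (\<Sum>w\<in>W. Q w * ln (Q w))
      = (\<Sum>(v, w)\<in>V \<times> W. p v w * ln (P v) + p v w * ln (Q w) + (p v w - P v * Q w))"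
    by (simp add: sum.distrib case_prod_beta')
  also have "\<dots> \<le> (\<Sum>(v, w)\<in>V \<times> W. p v w * ln (p v w))"
    using pointwise by (intro sum_mono) auto
  finally show ?thesis .
qed

context prob_space
begin

lemma prob_vimage_eq_sum:
  assumes "f \<in> measurable M (count_space V)" and "finite V" and "S \<subseteq> V"
  shows "prob (f -` S \<inter> space M) = (\<Sum>v\<in>S. prob (f -` {v} \<inter> space M))"
proof -
  have "f -` S \<inter> space M = (\<Union>v\<in>S. f -` {v} \<inter> space M)" by auto
  moreover have "measure M (\<Union>v\<in>S. f -` {v} \<inter> space M) = (\<Sum>v\<in>S. prob (f -` {v} \<inter> space M))"
    using assms by (intro measure_finite_Union)
      (auto simp: disjoint_family_on_def emeasure_eq_measure intro: finite_subset measurable_sets)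
  ultimately show ?thesis by simp
qed

lemma sum_prob_vimage_eq_1:
  assumes "f \<in> measurable M (count_space V)" and "finite V"
  shows "(\<Sum>v\<in>V. prob (f -` {v} \<inter> space M)) = 1"
proof -
  have "f -` V \<inter> space M = space M" using measurable_space[OF assms(1)] by auto
  then show ?thesis using prob_vimage_eq_sum[OF assms order_refl] prob_space by simp
qed

lemma discrete_entropy_nonneg: "0 \<le> discrete_entropy M V f"
proof -
  have "prob A * ln (prob A) \<le> 0" for A
  proof (cases "prob A = 0")
    case False
    then have "prob A > 0" using measure_nonneg[of M A] by linarith
    then show ?thesis by (simp add: mult_nonneg_nonpos)
  qed simp
  then show ?thesis unfolding discrete_entropy_def by (simp add: sum_nonpos)
qed

lemma discrete_entropy_le_factor:
  assumes g: "g \<in> measurable M (count_space W)" and W: "finite W" and V: "finite V"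
    and h: "h ` W \<subseteq> V" and fg: "\<And>\<omega>. \<omega> \<in> space M \<Longrightarrow> f \<omega> = h (g \<omega>)"
  shows "discrete_entropy M V f \<le> discrete_entropy M W g"
proof -
  define P where "P v = prob (f -` {v} \<inter> space M)" for v
  define Q where "Q w = prob (g -` {w} \<inter> space M)" for w
  have fibre: "f -` {v} \<inter> space M = g -` {w\<in>W. h w = v} \<inter> space M" for v
    using fg measurable_space[OF g] by auto
  have PQ: "P v = (\<Sum>w\<in>{w\<in>W. h w = v}. Q w)" for v
    unfolding P_def Q_def fibre by (rule prob_vimage_eq_sum[OF g W]) auto
  have QP: "Q w \<le> P (h w)" for w
  proof -
    have "f -` {h w} \<inter> space M \<in> events"
      unfolding fibre by (rule measurable_sets[OF g]) auto
    moreover have "g -` {w} \<inter> space M \<subseteq> f -` {h w} \<inter> space M" using fg by auto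
    ultimately show ?thesis unfolding P_def Q_def by (rule finite_measure_mono[rotated])
  qed
  have "(\<Sum>w\<in>W. Q w * ln (Q w)) \<le> (\<Sum>w\<in>W. Q w * ln (P (h w)))"
  proof (rule sum_mono)
    fix w
    show "Q w * ln (Q w) \<le> Q w * ln (P (h w))"
    proof (cases "Q w = 0")
      case False
      then have "Q w > 0" using measure_nonneg[of M] by (simp add: Q_def order_less_le)
      then show ?thesis using QP[of w] by (intro mult_left_mono) auto
    qed simp
  qed
  also have "\<dots> = (\<Sum>v\<in>V. \<Sum>w\<in>{w\<in>W. h w = v}. Q w * ln (P (h w)))"
    by (rule sum.group[OF W V h, symmetric])
  also have "\<dots> = (\<Sum>v\<in>V. P v * ln (P v))"
    by (simp add: PQ sum_distrib_right)
  finally show ?thesis unfolding discrete_entropy_def P_def Q_def by simp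
qed

lemma discrete_entropy_pair_le:
  assumes f: "f \<in> measurable M (count_space V)" and g: "g \<in> measurable M (count_space W)"
    and V: "finite V" and W: "finite W"
  shows "discrete_entropy M (V \<times> W) (\<lambda>\<omega>. (f \<omega>, g \<omega>)) \<le> discrete_entropy M V f + discrete_entropy M W g"
proof -
  have fg: "(\<lambda>\<omega>. (f \<omega>, g \<omega>)) \<in> measurable M (count_space (V \<times> W))"
    using f g V W by (intro measurable_pair_count_space countable_finite)
  define p where "p v w = prob ((\<lambda>\<omega>. (f \<omega>, g \<omega>)) -` {(v, w)} \<inter> space M)" for v w
  have fibre_sum: "prob ((\<lambda>\<omega>. (f \<omega>, g \<omega>)) -` (A \<times> B) \<inter> space M) = (\<Sum>v\<in>A. \<Sum>w\<in>B. p v w)"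
    if "A \<subseteq> V" "B \<subseteq> W" for A B
    using that V W
    by (subst prob_vimage_eq_sum[OF fg]) (auto simp: p_def sum.cartesian_product intro: finite_subset)
  have marg_f: "prob (f -` {v} \<inter> space M) = (\<Sum>w\<in>W. p v w)" if "v \<in> V" for v
  proof -
    have "f -` {v} \<inter> space M = (\<lambda>\<omega>. (f \<omega>, g \<omega>)) -` ({v} \<times> W) \<inter> space M"
      using measurable_space[OF g] by auto
    then show ?thesis using fibre_sum[of "{v}" W] that by simp
  qed
  have marg_g: "prob (g -` {w} \<inter> space M) = (\<Sum>v\<in>V. p v w)" if "w \<in> W" for w
  proof -
    have "g -` {w} \<inter> space M = (\<lambda>\<omega>. (f \<omega>, g \<omega>)) -` (V \<times> {w}) \<inter> space M"
      using measurable_space[OF f] by auto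
    then show ?thesis using fibre_sum[of V "{w}"] that by simp
  qed
  have "(\<Sum>v\<in>V. prob (f -` {v} \<inter> space M) * ln (prob (f -` {v} \<inter> space M)))
      + (\<Sum>w\<in>W. prob (g -` {w} \<inter> space M) * ln (prob (g -` {w} \<inter> space M)))
      \<le> (\<Sum>(v, w)\<in>V \<times> W. p v w * ln (p v w))"
    using V W marg_f marg_g sum_prob_vimage_eq_1[OF f V] sum_prob_vimage_eq_1[OF g W]
    by (intro sum_ln_marginals_le) (auto simp: p_def)
  then show ?thesis unfolding discrete_entropy_def p_def by (simp add: case_prod_beta')
qed

end

lemma discrete_entropy_distr:
  assumes T: "T \<in> measurable M N" and f: "f \<in> measurable N (count_space V)"
  shows "discrete_entropy M V (\<lambda>\<omega>. f (T \<omega>)) = discrete_entropy (distr M N T) V f"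
proof -
  have "(\<lambda>\<omega>. f (T \<omega>)) -` {v} \<inter> space M = T -` (f -` {v} \<inter> space N) \<inter> space M" for v
    using measurable_space[OF T] by auto
  moreover have "measure (distr M N T) (f -` {v} \<inter> space N) = measure M (T -` (f -` {v} \<inter> space N) \<inter> space M)"
    if "v \<in> V" for v
    using that by (intro measure_distr[OF T] measurable_sets[OF f]) auto
  ultimately show ?thesis unfolding discrete_entropy_def by simp
qed

definition block_entropy :: "(int^'d \<Rightarrow> 'e) measure \<Rightarrow> (int^'d) set \<Rightarrow> real" where
  "block_entropy \<mu> \<Lambda> = discrete_entropy \<mu> (configs \<Lambda>) (\<lambda>\<omega>. restrict \<omega> \<Lambda>)"

lemma block_entropy_eq:
  assumes "prob_on_Omega \<mu>"
  shows "block_entropy \<mu> \<Lambda> = - (\<Sum>s\<in>configs \<Lambda>. measure \<mu> (cyl \<Lambda> s) * ln (measure \<mu> (cyl \<Lambda> s)))"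
  unfolding block_entropy_def discrete_entropy_def space_prob_on_Omega[OF assms]
  by (intro arg_cong[where f=uminus] sum.cong refl) (simp add: vimage_restrict_eq_cyl)

lemma block_entropy_nonneg: "prob_on_Omega \<mu> \<Longrightarrow> 0 \<le> block_entropy \<mu> \<Lambda>"
  unfolding block_entropy_def by (rule prob_space.discrete_entropy_nonneg[OF prob_space_prob_on_Omega])

lemma measurable_restrict_configs_prob:
  fixes \<mu> :: "(int^'d \<Rightarrow> 'e::finite) measure"
  assumes "prob_on_Omega \<mu>" and "finite \<Lambda>"
  shows "(\<lambda>\<omega>. restrict \<omega> \<Lambda>) \<in> measurable \<mu> (count_space (configs \<Lambda>))"
  using assms(1) measurable_restrict_configs[OF assms(2)] by (rule measurable_prob_on_Omega)

lemma block_entropy_mono: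
  fixes \<mu> :: "(int^'d \<Rightarrow> 'e::finite) measure"
  assumes \<mu>: "prob_on_Omega \<mu>" and B: "finite B" and AB: "A \<subseteq> B"
  shows "block_entropy \<mu> A \<le> block_entropy \<mu> B"
  unfolding block_entropy_def
proof (rule prob_space.discrete_entropy_le_factor[OF prob_space_prob_on_Omega[OF \<mu>]
      measurable_restrict_configs_prob[OF \<mu> B]])
  show "finite (configs B :: (int^'d \<Rightarrow> 'e) set)" "finite (configs A :: (int^'d \<Rightarrow> 'e) set)"
    using B AB by (auto intro: finite_configs finite_subset)
  show "(\<lambda>t. restrict t A) ` configs B \<subseteq> configs A" by (auto simp: configs_def)
  show "restrict \<omega> A = restrict (restrict \<omega> B) A" for \<omega>
    using AB by (auto simp: restrict_def fun_eq_iff)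
qed

lemma block_entropy_Un_le:
  fixes \<mu> :: "(int^'d \<Rightarrow> 'e::finite) measure"
  assumes \<mu>: "prob_on_Omega \<mu>" and A: "finite A" and B: "finite B"
  shows "block_entropy \<mu> (A \<union> B) \<le> block_entropy \<mu> A + block_entropy \<mu> B"
proof -
  interpret prob_space \<mu> using \<mu> by (rule prob_space_prob_on_Omega)
  have fin: "finite (configs A :: (int^'d \<Rightarrow> 'e) set)" "finite (configs B :: (int^'d \<Rightarrow> 'e) set)"
    using A B by (auto intro: finite_configs)
  define join :: "(int^'d \<Rightarrow> 'e) \<times> (int^'d \<Rightarrow> 'e) \<Rightarrow> int^'d \<Rightarrow> 'e"
    where "join = (\<lambda>(s, t) y. if y \<in> A then s y else if y \<in> B then t y else undefined)"
  have "block_entropy \<mu> (A \<union> B)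
      \<le> discrete_entropy \<mu> (configs A \<times> configs B) (\<lambda>\<omega>. (restrict \<omega> A, restrict \<omega> B))"
    unfolding block_entropy_def
  proof (rule discrete_entropy_le_factor[where h=join])
    show "(\<lambda>\<omega>. (restrict \<omega> A, restrict \<omega> B)) \<in> measurable \<mu> (count_space (configs A \<times> configs B))"
      using fin by (intro measurable_pair_count_space measurable_restrict_configs_prob \<mu> A B countable_finite)
    show "finite (configs (A \<union> B) :: (int^'d \<Rightarrow> 'e) set)" using A B by (intro finite_configs) simp
    show "join ` (configs A \<times> configs B) \<subseteq> configs (A \<union> B)"
      by (auto simp: join_def configs_def PiE_def extensional_def)
    show "restrict \<omega> (A \<union> B) = join (restrict \<omega> A, restrict \<omega> B)" for \<omega>
      by (auto simp: join_def restrict_def)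
  qed (use fin in simp)
  also have "\<dots> \<le> block_entropy \<mu> A + block_entropy \<mu> B"
    unfolding block_entropy_def
    by (rule discrete_entropy_pair_le[OF measurable_restrict_configs_prob[OF \<mu> A]
          measurable_restrict_configs_prob[OF \<mu> B] fin])
  finally show ?thesis .
qed

lemma block_entropy_empty: "prob_on_Omega \<mu> \<Longrightarrow> block_entropy \<mu> {} = 0"
  by (simp add: block_entropy_eq configs_def cyl_def space_prob_on_Omega prob_space.prob_space
      prob_space_prob_on_Omega flip: space_prob_on_Omega)

lemma block_entropy_UN_le:
  fixes \<mu> :: "(int^'d \<Rightarrow> 'e::finite) measure"
  assumes \<mu>: "prob_on_Omega \<mu>" and "finite I" and "\<And>i. i \<in> I \<Longrightarrow> finite (A i)"
  shows "block_entropy \<mu> (\<Union>i\<in>I. A i) \<le> (\<Sum>i\<in>I. block_entropy \<mu> (A i))"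
  using assms(2,3)
proof (induction I rule: finite_induct)
  case empty
  then show ?case using block_entropy_empty[OF \<mu>] by simp
next
  case (insert j I)
  have "block_entropy \<mu> (\<Union>i\<in>insert j I. A i) \<le> block_entropy \<mu> (A j) + block_entropy \<mu> (\<Union>i\<in>I. A i)"
    using insert by (simp add: block_entropy_Un_le[OF \<mu>])
  then show ?case using insert by simp
qed

lemma block_entropy_translate:
  fixes \<mu> :: "(int^'d \<Rightarrow> 'e::finite) measure"
  assumes inv: "inv_measure \<mu>" and \<Lambda>: "finite \<Lambda>"
  shows "block_entropy \<mu> ((\<lambda>y. x + y) ` \<Lambda>) = block_entropy \<mu> \<Lambda>"
proof -
  have \<mu>: "prob_on_Omega \<mu>" using inv by (simp add: inv_measure_def)
  interpret prob_space \<mu> using \<mu> by (rule prob_space_prob_on_Omega)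
  define \<Lambda>' where "\<Lambda>' = (\<lambda>y. x + y) ` \<Lambda>"
  have fin: "finite (configs \<Lambda> :: (int^'d \<Rightarrow> 'e) set)" "finite (configs \<Lambda>' :: (int^'d \<Rightarrow> 'e) set)"
    using \<Lambda> by (auto intro: finite_configs simp: \<Lambda>'_def)
  have shifted: "(\<lambda>\<omega>. restrict (shift x \<omega>) \<Lambda>) \<in> measurable \<mu> (count_space (configs \<Lambda>))"
    using \<mu> measurable_compose[OF measurable_shift measurable_restrict_configs[OF \<Lambda>]]
    by (rule measurable_prob_on_Omega)
  have "discrete_entropy \<mu> (configs \<Lambda>) (\<lambda>\<omega>. restrict (shift x \<omega>) \<Lambda>)
      = discrete_entropy (distr \<mu> Omega (shift x)) (configs \<Lambda>) (\<lambda>\<omega>. restrict \<omega> \<Lambda>)"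
    by (rule discrete_entropy_distr[OF measurable_prob_on_Omega[OF \<mu> measurable_shift]
          measurable_restrict_configs[OF \<Lambda>]])
  also have "\<dots> = block_entropy \<mu> \<Lambda>"
    using inv by (simp add: inv_measure_def block_entropy_def)
  finally have eq: "discrete_entropy \<mu> (configs \<Lambda>) (\<lambda>\<omega>. restrict (shift x \<omega>) \<Lambda>) = block_entropy \<mu> \<Lambda>" .
  have "block_entropy \<mu> \<Lambda>' \<le> discrete_entropy \<mu> (configs \<Lambda>) (\<lambda>\<omega>. restrict (shift x \<omega>) \<Lambda>)"
    unfolding block_entropy_def
  proof (rule discrete_entropy_le_factor[OF shifted fin])
    show "(\<lambda>s z. if z \<in> \<Lambda>' then s (z - x) else undefined) ` configs \<Lambda> \<subseteq> configs \<Lambda>'"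
      by (auto simp: configs_def \<Lambda>'_def)
    show "restrict \<omega> \<Lambda>' = (\<lambda>s z. if z \<in> \<Lambda>' then s (z - x) else undefined) (restrict (shift x \<omega>) \<Lambda>)" for \<omega>
      by (auto simp: restrict_def shift_def \<Lambda>'_def fun_eq_iff)
  qed
  moreover have "discrete_entropy \<mu> (configs \<Lambda>) (\<lambda>\<omega>. restrict (shift x \<omega>) \<Lambda>) \<le> block_entropy \<mu> \<Lambda>'"
    unfolding block_entropy_def
  proof (rule discrete_entropy_le_factor[OF measurable_restrict_configs_prob[OF \<mu>] fin(2,1)])
    show "finite \<Lambda>'" using \<Lambda> by (simp add: \<Lambda>'_def)
    show "(\<lambda>t y. if y \<in> \<Lambda> then t (x + y) else undefined) ` configs \<Lambda>' \<subseteq> configs \<Lambda>"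
      by (auto simp: configs_def)
    show "restrict (shift x \<omega>) \<Lambda> = (\<lambda>t y. if y \<in> \<Lambda> then t (x + y) else undefined) (restrict \<omega> \<Lambda>')" for \<omega>
      by (auto simp: restrict_def shift_def \<Lambda>'_def fun_eq_iff)
  qed
  ultimately show ?thesis using eq by (simp add: \<Lambda>'_def)
qed

lemma block_entropy_Lam_le_cover:
  fixes \<mu> :: "(int^'d \<Rightarrow> 'e::finite) measure"
  assumes inv: "inv_measure \<mu>" and "n \<le> m + (2 * m + 1) * K"
  shows "block_entropy \<mu> (Lam n) \<le> real (card (Lam K :: (int^'d) set)) * block_entropy \<mu> (Lam m)"
proof -
  have \<mu>: "prob_on_Omega \<mu>" using inv by (simp add: inv_measure_def)
  let ?T = "\<lambda>k :: int^'d. (\<lambda>y. (\<chi> i. (2 * int m + 1) * k $ i) + y) ` Lam m"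
  have "block_entropy \<mu> (Lam n) \<le> block_entropy \<mu> (\<Union>k\<in>Lam K. ?T k)"
    using Lam_subset_translates[OF assms(2)] by (intro block_entropy_mono[OF \<mu>]) auto
  also have "\<dots> \<le> (\<Sum>k\<in>Lam K. block_entropy \<mu> (?T k))"
    by (rule block_entropy_UN_le[OF \<mu>]) auto
  also have "\<dots> = (\<Sum>k\<in>(Lam K :: (int^'d) set). block_entropy \<mu> (Lam m))"
    by (simp add: block_entropy_translate[OF inv])
  finally show ?thesis by simp
qed

lemma block_entropy_density_le:
  fixes \<mu> :: "(int^'d \<Rightarrow> 'e::finite) measure"
  assumes inv: "inv_measure \<mu>"
  shows "block_entropy \<mu> (Lam n) / card (Lam n :: (int^'d) set)
    \<le> ((2 * real n + 3 * (2 * real m + 1)) / (2 * real n + 1)) ^ CARD('d)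
        * (block_entropy \<mu> (Lam m) / card (Lam m :: (int^'d) set))"
proof -
  define c where "c = 2 * m + 1"
  define K where "K = n div c + 1"
  define d where "d = CARD('d)"
  have "n mod c < c" by (simp add: c_def)
  then have "n < c * (n div c) + c" using mult_div_mod_eq[of c n] by linarith
  then have "n \<le> m + (2 * m + 1) * K" unfolding K_def c_def by (simp add: algebra_simps)
  then have "block_entropy \<mu> (Lam n) / card (Lam n :: (int^'d) set)
      \<le> real (card (Lam K :: (int^'d) set)) * block_entropy \<mu> (Lam m) / card (Lam n :: (int^'d) set)"
    using card_Lam_pos[of n] by (intro divide_right_mono block_entropy_Lam_le_cover[OF inv]) auto
  also have "\<dots> = ((2 * real K + 1) * real c / (2 * real n + 1)) ^ d
      * (block_entropy \<mu> (Lam m) / card (Lam m :: (int^'d) set))"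
  proof -
    have "((2 * real K + 1) * real c / (2 * real n + 1)) ^ d
        = (2 * real K + 1) ^ d * real c ^ d / (2 * real n + 1) ^ d"
      by (simp add: power_divide power_mult_distrib)
    moreover have "real c = 2 * real m + 1" by (simp add: c_def)
    moreover have "real c ^ d > 0" "(2 * real n + 1) ^ d > 0" by (simp_all add: c_def)
    ultimately show ?thesis unfolding card_Lam_real d_def[symmetric] by (simp add: field_simps)
  qed
  also have "\<dots> \<le> ((2 * real n + 3 * (2 * real m + 1)) / (2 * real n + 1)) ^ d
      * (block_entropy \<mu> (Lam m) / card (Lam m :: (int^'d) set))"
  proof (intro mult_right_mono power_mono divide_right_mono)
    have "c * (n div c) \<le> n" by simp
    then have "real c * real (n div c) \<le> real n" by (metis of_nat_le_iff of_nat_mult)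
    then show "(2 * real K + 1) * real c \<le> 2 * real n + 3 * (2 * real m + 1)"
      by (simp add: K_def c_def algebra_simps)
    show "0 \<le> block_entropy \<mu> (Lam m) / real (card (Lam m :: (int^'d) set))"
      using inv by (simp add: inv_measure_def block_entropy_nonneg)
  qed auto
  finally show ?thesis unfolding d_def .
qed

lemma tendsto_Inf_if_le_asymptotically:
  fixes a :: "nat \<Rightarrow> real"
  assumes "bdd_below (range a)" and le: "\<And>m n. a n \<le> q m n * a m" and q: "\<And>m. q m \<longlonglongrightarrow> 1"
  shows "a \<longlonglongrightarrow> Inf (range a)"
proof (rule order_tendstoI)
  fix y assume "y < Inf (range a)"
  then show "eventually (\<lambda>n. y < a n) sequentially"
    by (intro always_eventually allI) (meson cInf_lower[OF rangeI assms(1)] less_le_trans)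
next
  fix y assume "Inf (range a) < y"
  then obtain m where "a m < y" using cInf_lessD[of "range a"] by auto
  moreover have "(\<lambda>n. q m n * a m) \<longlonglongrightarrow> 1 * a m" by (intro tendsto_mult q tendsto_const)
  ultimately have "eventually (\<lambda>n. q m n * a m < y) sequentially" by (simp add: order_tendstoD)
  then show "eventually (\<lambda>n. a n < y) sequentially"
    by eventually_elim (use le in \<open>auto intro: le_less_trans\<close>)
qed

lemma tendsto_ks_entropy:
  fixes \<mu> :: "(int^'d \<Rightarrow> 'e::finite) measure"
  assumes inv: "inv_measure \<mu>"
  shows "(\<lambda>n. block_entropy \<mu> (Lam n) / card (Lam n :: (int^'d) set)) \<longlonglongrightarrow> ks_entropy \<mu>"
proof -
  have \<mu>: "prob_on_Omega \<mu>" using inv by (simp add: inv_measure_def)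
  let ?a = "\<lambda>n. block_entropy \<mu> (Lam n) / card (Lam n :: (int^'d) set)"
  have lim: "?a \<longlonglongrightarrow> Inf (range ?a)"
  proof (rule tendsto_Inf_if_le_asymptotically)
    show "bdd_below (range ?a)"
      using block_entropy_nonneg[OF \<mu>] by (intro bdd_belowI[of _ 0]) auto
    show "?a n \<le> ((2 * real n + 3 * (2 * real m + 1)) / (2 * real n + 1)) ^ CARD('d) * ?a m" for m n
      by (rule block_entropy_density_le[OF inv])
    show "(\<lambda>n. ((2 * real n + 3 * (2 * real m + 1)) / (2 * real n + 1)) ^ CARD('d)) \<longlonglongrightarrow> 1" for m
      by (rule tendsto_box_ratio)
  qed
  have "ks_entropy \<mu> = - lim (\<lambda>n. - ?a n)"
    unfolding ks_entropy_def block_entropy_eq[OF \<mu>] by simp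
  also have "lim (\<lambda>n. - ?a n) = - Inf (range ?a)"
    using lim by (intro limI tendsto_minus)
  finally show ?thesis using lim by simp
qed

section \<open>Gluing along the lexicographic order\<close>

lemma lex_le_refl [simp]: "lex_le x x"
  by (simp add: lex_le_def)

lemma lex_le_total: "lex_le x y \<or> lex_le y x"
proof (cases "x = y")
  case False
  define D where "D = {i. x $ i \<noteq> y $ i}"
  have "D \<noteq> {}" using False by (auto simp: D_def vec_eq_iff)
  then have i: "Min D \<in> D" by (intro Min_in) simp_all
  have eq: "x $ j = y $ j" if "j < Min D" for j
  proof (rule ccontr)
    assume "x $ j \<noteq> y $ j"
    then have "Min D \<le> j" by (simp add: D_def)
    then show False using that by simp
  qed
  show ?thesis
  proof (cases "x $ Min D < y $ Min D")
    case True then show ?thesis using eq unfolding lex_le_def by blast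
  next
    case False
    then have "y $ Min D < x $ Min D" using i by (auto simp: D_def)
    then show ?thesis using eq unfolding lex_le_def by (metis (full_types))
  qed
qed simp

lemma lex_le_antisym: "lex_le x y \<Longrightarrow> lex_le y x \<Longrightarrow> x = y"
proof (rule ccontr)
  assume "lex_le x y" "lex_le y x" "x \<noteq> y"
  then obtain i k where i: "x $ i < y $ i" "\<forall>j<i. x $ j = y $ j"
    and k: "y $ k < x $ k" "\<forall>j<k. y $ j = x $ j"
    unfolding lex_le_def by blast
  show False using i k by (cases i k rule: linorder_cases) auto
qed

lemma lex_le_trans: "lex_le x y \<Longrightarrow> lex_le y z \<Longrightarrow> lex_le x z"
proof -
  assume xy: "lex_le x y" and yz: "lex_le y z"
  show ?thesis
  proof (cases "x = y \<or> y = z")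
    case False
    then obtain i k where i: "x $ i < y $ i" "\<forall>j<i. x $ j = y $ j"
      and k: "y $ k < z $ k" "\<forall>j<k. y $ j = z $ j"
      using xy yz unfolding lex_le_def by blast
    have "x $ min i k < z $ min i k" "\<forall>j<min i k. x $ j = z $ j"
      using i k by (cases i k rule: linorder_cases; simp add: min_def)+
    then show ?thesis unfolding lex_le_def by blast
  qed (use xy yz in auto)
qed

lemma lex_le_translate: "lex_le (x + c) (y + c) \<longleftrightarrow> lex_le x y"
  unfolding lex_le_def by (auto simp: vec_eq_iff)

lemma exists_lex_max:
  assumes "finite A" and "A \<noteq> {}"
  shows "\<exists>m\<in>A. \<forall>y\<in>A. lex_le y m"
  using assms
proof (induction A rule: finite_ne_induct)
  case (insert x F)
  then obtain m where m: "m \<in> F" "\<forall>y\<in>F. lex_le y m" by blast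
  show ?case
  proof (cases "lex_le m x")
    case True
    then have "\<forall>y\<in>insert x F. lex_le y x" using m(2) by (auto intro: lex_le_trans)
    then show ?thesis by blast
  next
    case False
    then have "\<forall>y\<in>insert x F. lex_le y m" using m(2) lex_le_total[of m x] by simp
    then show ?thesis using m(1) by blast
  qed
qed simp

lemma sum_lex_telescope:
  fixes G :: "(int^('d::{finite,linorder})) set \<Rightarrow> real"
  assumes "finite \<Lambda>"
  shows "(\<Sum>x\<in>\<Lambda>. G {y\<in>\<Lambda>. lex_le y x} - G {y\<in>\<Lambda>. lex_le y x \<and> y \<noteq> x}) = G \<Lambda> - G {}"
  using assms
proof (induction "card \<Lambda>" arbitrary: \<Lambda>)
  case (Suc n)
  then obtain m where m: "m \<in> \<Lambda>" "\<forall>y\<in>\<Lambda>. lex_le y m"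
    using exists_lex_max[of \<Lambda>] by fastforce
  define L where "L = \<Lambda> - {m}"
  define D where "D A x = G {y\<in>A. lex_le y x} - G {y\<in>A. lex_le y x \<and> y \<noteq> x}" for A x
  have "\<not> lex_le m x" if "x \<in> L" for x
    using that m lex_le_antisym by (auto simp: L_def)
  then have "D \<Lambda> x = D L x" if "x \<in> L" for x
    using that unfolding D_def by (intro arg_cong2[where f=minus] arg_cong[where f=G]) (auto simp: L_def)
  moreover have "D \<Lambda> m = G \<Lambda> - G L"
    using m unfolding D_def by (intro arg_cong2[where f=minus] arg_cong[where f=G]) (auto simp: L_def)
  moreover have "n = card L" "finite L" using Suc.hyps(2) Suc.prems m(1) by (auto simp: L_def)
  then have "(\<Sum>x\<in>L. D L x) = G L - G {}" unfolding D_def by (rule Suc.hyps(1))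
  ultimately have "(\<Sum>x\<in>\<Lambda>. D \<Lambda> x) = G \<Lambda> - G {}"
    using sum.remove[OF Suc.prems m(1), of "D \<Lambda>"] by (simp add: L_def[symmetric])
  then show ?case by (simp add: D_def)
qed simp

definition glue_lt ::
  "(int^('d::{finite,linorder}) \<Rightarrow> 'e) \<Rightarrow> (int^('d::{finite,linorder}) \<Rightarrow> 'e) \<Rightarrow> (int^('d::{finite,linorder}) \<Rightarrow> 'e)"
  where
  "glue_lt \<sigma> \<xi> = (\<lambda>x. if lex_le x 0 \<and> x \<noteq> 0 then \<sigma> x else \<xi> x)"

lemma glue_0 [simp]: "glue \<sigma> \<xi> 0 = \<sigma> 0"
  by (simp add: glue_def)

lemma glue_lt_0 [simp]: "glue_lt \<sigma> \<xi> 0 = \<xi> 0"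
  by (simp add: glue_lt_def)

lemma glue_lt_eq_glue: "x \<noteq> 0 \<Longrightarrow> glue_lt \<sigma> \<xi> x = glue \<sigma> \<xi> x"
  by (simp add: glue_def glue_lt_def)

lemma measurable_glue:
  "(\<lambda>p. glue (snd p) (fst p)) \<in> measurable (Omega \<Otimes>\<^sub>M Omega) (Omega :: (int^('d::{finite,linorder}) \<Rightarrow> 'e) measure)"
proof (rule measurable_into_Omega)
  fix x
  show "(\<lambda>p. glue (snd p) (fst p) x) \<in> measurable (Omega \<Otimes>\<^sub>M Omega) (count_space UNIV)"
    using measurable_compose[OF measurable_snd measurable_Omega_coord]
      measurable_compose[OF measurable_fst measurable_Omega_coord]
    by (cases "lex_le x 0") (simp_all add: glue_def)
qed

lemma lex_le_add_self_iff: "lex_le (x + y) x \<longleftrightarrow> lex_le y 0"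
  using lex_le_translate[of y x 0] by (simp add: add.commute)

lemma shift_glue: "shift x (\<lambda>y. if lex_le y x then \<sigma> y else \<xi> y) = glue (shift x \<sigma>) (shift x \<xi>)"
  by (simp add: shift_def glue_def lex_le_add_self_iff)

lemma shift_glue_lt:
  "shift x (\<lambda>y. if lex_le y x \<and> y \<noteq> x then \<sigma> y else \<xi> y) = glue_lt (shift x \<sigma>) (shift x \<xi>)"
  by (simp add: shift_def glue_lt_def lex_le_add_self_iff)

section \<open>Cylinder probabilities of a nonnull Gibbs measure\<close>

lemma integral_indicator_mult_bounds:
  fixes f :: "'a \<Rightarrow> real"
  assumes "prob_space M" and f: "f \<in> borel_measurable M" and C: "C \<in> sets M"
    and lo: "\<And>x. x \<in> C \<Longrightarrow> a \<le> f x" and hi: "\<And>x. x \<in> C \<Longrightarrow> f x \<le> b"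
  shows "a * measure M C \<le> (\<integral>x. indicator C x * f x \<partial>M)"
    and "(\<integral>x. indicator C x * f x \<partial>M) \<le> b * measure M C"
proof -
  interpret prob_space M by (rule assms(1))
  have "norm (indicator C x * f x) \<le> max \<bar>a\<bar> \<bar>b\<bar>" for x
    using lo[of x] hi[of x] by (auto simp: indicator_def)
  then have int: "integrable M (\<lambda>x. indicator C x * f x)"
    using f C by (intro integrable_const_bound[where B="max \<bar>a\<bar> \<bar>b\<bar>"]) auto
  have intC: "integrable M (\<lambda>x. indicator C x * c)" for c :: real
    using C by (intro integrable_mult_left integrable_real_indicator) (auto simp: emeasure_eq_measure)
  have const: "(\<integral>x. indicator C x * c \<partial>M) = c * measure M C" for c :: real
    using C by (simp add: sets.Int_space_eq2)
  show "a * measure M C \<le> (\<integral>x. indicator C x * f x \<partial>M)"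
    unfolding const[symmetric] using lo
    by (intro integral_mono[OF intC int]) (auto simp: indicator_def)
  show "(\<integral>x. indicator C x * f x \<partial>M) \<le> b * measure M C"
    unfolding const[symmetric] using hi
    by (intro integral_mono[OF int intC]) (auto simp: indicator_def)
qed

lemma abs_ln_diff_le:
  fixes a c x y :: real
  assumes "0 < a" "0 < c" "a * c \<le> x" "x \<le> c" "a * c \<le> y" "y \<le> c"
  shows "\<bar>ln x - ln y\<bar> \<le> - ln a"
proof -
  have "0 < a * c" using assms(1,2) by simp
  then have "0 < x" "0 < y" using assms by linarith+
  then have "ln (a * c) \<le> ln x" "ln x \<le> ln c" "ln (a * c) \<le> ln y" "ln y \<le> ln c"
    using assms \<open>0 < a * c\<close> by simp_all
  moreover have "ln (a * c) = ln a + ln c" using assms(1,2) by (simp add: ln_mult)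
  ultimately show ?thesis by linarith
qed

definition ln_cyl :: "(int^'d \<Rightarrow> 'e) measure \<Rightarrow> (int^'d) set \<Rightarrow> (int^'d \<Rightarrow> 'e) \<Rightarrow> real" where
  "ln_cyl \<nu> \<Lambda> \<omega> = ln (measure \<nu> (cyl \<Lambda> \<omega>))"

text \<open>
  For \<open>p = (\<xi>, \<sigma>)\<close>, the log-ratio of the cylinder probabilities of \<open>\<sigma>\<^sup>\<xi>\<close> and of
  \<open>\<sigma>\<^sup>\<xi>\<close> with its value at the origin taken from \<open>\<xi>\<close>. Telescoping
  \<open>ln \<nu>(\<sigma>\<^sub>\<Lambda>) - ln \<nu>(\<xi>\<^sub>\<Lambda>)\<close> in lexicographic order produces translates of these terms.
\<close>
definition ln_cyl_ratio ::
  "(int^('d::{finite,linorder}) \<Rightarrow> 'e) measure \<Rightarrow> (int^('d::{finite,linorder})) set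
    \<Rightarrow> (int^('d::{finite,linorder}) \<Rightarrow> 'e) \<times> (int^('d::{finite,linorder}) \<Rightarrow> 'e) \<Rightarrow> real" where
  "ln_cyl_ratio \<nu> \<Delta> p = ln_cyl \<nu> \<Delta> (glue (snd p) (fst p)) - ln_cyl \<nu> \<Delta> (glue_lt (snd p) (fst p))"

definition ln_gamma0_ratio ::
  "((int^('d::{finite,linorder})) set \<Rightarrow> (int^('d::{finite,linorder}) \<Rightarrow> 'e) \<Rightarrow> (int^('d::{finite,linorder}) \<Rightarrow> 'e) measure)
    \<Rightarrow> (int^('d::{finite,linorder}) \<Rightarrow> 'e) \<times> (int^('d::{finite,linorder}) \<Rightarrow> 'e) \<Rightarrow> real" where
  "ln_gamma0_ratio \<gamma> p = ln (gamma0 \<gamma> (glue (snd p) (fst p)) (glue (snd p) (fst p))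
      / gamma0 \<gamma> (fst p) (glue (snd p) (fst p)))"

lemma cyl_0: "{\<omega>. \<omega> 0 = \<zeta> 0} = cyl {0} \<zeta>"
  by (auto simp: cyl_def)

lemma cyl_insert_0: "0 \<in> \<Delta> \<Longrightarrow> cyl \<Delta> \<eta> = cyl (\<Delta> - {0}) \<eta> \<inter> {\<omega>. \<omega> 0 = \<eta> 0}"
  by (auto simp: cyl_def)

lemma ln_cyl_agree: "\<forall>x\<in>\<Lambda>. \<omega> x = \<omega>' x \<Longrightarrow> ln_cyl \<nu> \<Lambda> \<omega> = ln_cyl \<nu> \<Lambda> \<omega>'"
  unfolding ln_cyl_def by (metis cyl_cong)

lemma borel_measurable_ln_cyl:
  fixes \<nu> :: "(int^'d \<Rightarrow> 'e::finite) measure"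
  shows "finite \<Lambda> \<Longrightarrow> ln_cyl \<nu> \<Lambda> \<in> borel_measurable Omega"
  by (rule borel_measurable_Omega_local) (auto intro: ln_cyl_agree)

lemma ln_cyl_bounded:
  fixes \<nu> :: "(int^'d \<Rightarrow> 'e::finite) measure"
  assumes "finite \<Lambda>"
  obtains B where "\<And>\<omega>. \<bar>ln_cyl \<nu> \<Lambda> \<omega>\<bar> \<le> B"
  using bounded_if_local[OF assms, of "ln_cyl \<nu> \<Lambda>"] ln_cyl_agree by blast

lemma integrable_ln_cyl:
  fixes \<nu> :: "(int^'d \<Rightarrow> 'e::finite) measure"
  assumes "prob_on_Omega \<mu>" and "finite \<Lambda>"
  shows "integrable \<mu> (ln_cyl \<nu> \<Lambda>)"
proof -
  obtain B where "\<And>\<omega>. \<bar>ln_cyl \<nu> \<Lambda> \<omega>\<bar> \<le> B" using ln_cyl_bounded[OF assms(2)] by blast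
  with assms show ?thesis by (intro integrable_bounded_prob_on_Omega borel_measurable_ln_cyl)
qed

lemma integral_ln_cyl_quotient:
  fixes \<mu> \<nu> :: "(int^'d \<Rightarrow> 'e::finite) measure"
  assumes "prob_on_Omega lam" and "finite \<Lambda>"
    and "\<And>s. 0 < measure \<mu> (cyl \<Lambda> s)" and "\<And>s. 0 < measure \<nu> (cyl \<Lambda> s)"
  shows "(\<integral>\<xi>. ln (measure \<mu> (cyl \<Lambda> \<xi>) / measure \<nu> (cyl \<Lambda> \<xi>)) \<partial>lam)
    = (\<integral>\<xi>. ln_cyl \<mu> \<Lambda> \<xi> \<partial>lam) - (\<integral>\<xi>. ln_cyl \<nu> \<Lambda> \<xi> \<partial>lam)"
proof -
  have "ln (measure \<mu> (cyl \<Lambda> \<xi>) / measure \<nu> (cyl \<Lambda> \<xi>)) = ln_cyl \<mu> \<Lambda> \<xi> - ln_cyl \<nu> \<Lambda> \<xi>" for \<xi>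
    using assms(3)[of \<xi>] assms(4)[of \<xi>] by (simp add: ln_cyl_def ln_div)
  then show ?thesis using integrable_ln_cyl[OF assms(1,2)] by simp
qed

lemma rel_entropy_seq_self: "rel_entropy_seq \<mu> \<mu> n = 0"
proof -
  have zero: "x * ln (x / x) = 0" for x :: real by (cases "x = 0") simp_all
  show ?thesis unfolding rel_entropy_seq_def hLam_def zero by simp
qed

locale inv_gibbs =
  fixes \<gamma> :: "(int^('d::{finite,linorder})) set \<Rightarrow> (int^('d::{finite,linorder}) \<Rightarrow> 'e::finite)
      \<Rightarrow> (int^('d::{finite,linorder}) \<Rightarrow> 'e::finite) measure"
    and \<nu> :: "(int^('d::{finite,linorder}) \<Rightarrow> 'e::finite) measure"
  assumes spec: "is_specification \<gamma>" and nonnull: "nonnull_spec \<gamma>"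
    and gibbs: "gibbs \<gamma> \<nu>" and inv: "inv_measure \<nu>"
begin

lemma prob_on_Omega_nu: "prob_on_Omega \<nu>"
  using inv by (simp add: inv_measure_def)

lemma prob_space_nu: "prob_space \<nu>"
  using prob_on_Omega_nu by (rule prob_space_prob_on_Omega)

lemma sets_nu [measurable_cong]: "sets \<nu> = sets Omega"
  using prob_on_Omega_nu by (simp add: prob_on_Omega_def)

lemma space_nu [simp]: "space \<nu> = UNIV"
  using prob_on_Omega_nu by (rule space_prob_on_Omega)

lemma prob_on_Omega_gamma: "finite \<Lambda> \<Longrightarrow> \<Lambda> \<noteq> {} \<Longrightarrow> prob_on_Omega (\<gamma> \<Lambda> \<omega>)"
  using spec by (simp add: is_specification_def)

lemma measurable_gamma_Fsig:
  "finite \<Lambda> \<Longrightarrow> \<Lambda> \<noteq> {} \<Longrightarrow> A \<in> sets Omega \<Longrightarrow> (\<lambda>\<omega>. measure (\<gamma> \<Lambda> \<omega>) A) \<in> borel_measurable (Fsig (- \<Lambda>))"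
  using spec by (simp add: is_specification_def)

lemma gibbs_integral_indicator:
  assumes "finite \<Lambda>" "\<Lambda> \<noteq> {}" and A: "A \<in> sets Omega" and C: "C \<in> sets (Fsig (- \<Lambda>))"
  shows "measure \<nu> (C \<inter> A) = (\<integral>\<omega>. indicator C \<omega> * measure (\<gamma> \<Lambda> \<omega>) A \<partial>\<nu>)"
proof -
  interpret prob_space \<nu> by (rule prob_space_nu)
  interpret finite_measure_subalgebra \<nu> "Fsig (- \<Lambda>)"
    by unfold_locales (rule subalgebra_Fsig[OF sets_nu])
  have sets: "C \<in> sets \<nu>" "A \<in> sets \<nu>" using C A sets_Fsig_subset sets_nu by auto
  have "AE \<omega> in \<nu>. real_cond_exp \<nu> (Fsig (- \<Lambda>)) (indicator A) \<omega> = measure (\<gamma> \<Lambda> \<omega>) A"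
    using gibbs assms(1,2) A unfolding gibbs_def by blast
  then have "(\<integral>\<omega>. indicator C \<omega> * measure (\<gamma> \<Lambda> \<omega>) A \<partial>\<nu>)
      = (\<integral>\<omega>. indicator C \<omega> * real_cond_exp \<nu> (Fsig (- \<Lambda>)) (indicator A) \<omega> \<partial>\<nu>)"
    using sets measurable_prob_on_Omega[OF prob_on_Omega_nu
        measurable_Fsig_imp_Omega[OF measurable_gamma_Fsig[OF assms(1,2) A]]]
    by (intro integral_cong_AE) (auto elim: AE_mp)
  also have "\<dots> = (\<integral>\<omega>. indicator C \<omega> * indicator A \<omega> \<partial>\<nu>)"
    using sets C by (intro real_cond_exp_intg(2)) (auto simp: indicator_inter_arith[symmetric] emeasure_eq_measure)
  also have "\<dots> = measure \<nu> (C \<inter> A)"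
    using sets by (simp flip: indicator_inter_arith)
  finally show ?thesis ..
qed

lemma nonnull_lower_bound:
  assumes "finite \<Lambda>" "\<Lambda> \<noteq> {}"
  obtains a where "0 < a" "\<And>\<sigma> \<eta>. a < measure (\<gamma> \<Lambda> \<eta>) (cyl \<Lambda> \<sigma>)"
proof -
  obtain a where a: "0 < a" "a < (INF p. measure (\<gamma> \<Lambda> (snd p)) (cyl \<Lambda> (fst p)))"
    using nonnull assms unfolding nonnull_spec_def by blast
  have bdd: "bdd_below (range (\<lambda>p. measure (\<gamma> \<Lambda> (snd p)) (cyl \<Lambda> (fst p))))"
    by (intro bdd_belowI[of _ 0]) auto
  have "a < measure (\<gamma> \<Lambda> \<eta>) (cyl \<Lambda> \<sigma>)" for \<sigma> \<eta>
  proof -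
    have "(INF p. measure (\<gamma> \<Lambda> (snd p)) (cyl \<Lambda> (fst p)))
        \<le> measure (\<gamma> \<Lambda> (snd (\<sigma>, \<eta>))) (cyl \<Lambda> (fst (\<sigma>, \<eta>)))"
      by (rule cINF_lower[OF bdd]) simp
    then show ?thesis using a(2) by simp
  qed
  with a(1) show ?thesis by (rule that)
qed

lemma cyl_measure_lower_bound:
  assumes "finite \<Lambda>"
  obtains a where "0 < a" "\<And>s. a \<le> measure \<nu> (cyl \<Lambda> s)"
proof (cases "\<Lambda> = {}")
  case True
  then show ?thesis using prob_space.prob_space[OF prob_space_nu] by (intro that[of 1]) (simp_all add: cyl_def)
next
  case False
  obtain a where a: "0 < a" "\<And>\<sigma> \<eta>. a < measure (\<gamma> \<Lambda> \<eta>) (cyl \<Lambda> \<sigma>)"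
    using nonnull_lower_bound[OF assms False] by blast
  have "a \<le> measure \<nu> (cyl \<Lambda> s)" for s
  proof -
    have "UNIV \<in> sets (Fsig (- \<Lambda>))" using sets.top[of "Fsig (- \<Lambda>)"] by simp
    then have "measure \<nu> (UNIV \<inter> cyl \<Lambda> s) = (\<integral>\<omega>. indicator UNIV \<omega> * measure (\<gamma> \<Lambda> \<omega>) (cyl \<Lambda> s) \<partial>\<nu>)"
      by (rule gibbs_integral_indicator[OF assms False cyl_in_sets_Omega[OF assms]])
    moreover have "a * measure \<nu> UNIV \<le> (\<integral>\<omega>. indicator UNIV \<omega> * measure (\<gamma> \<Lambda> \<omega>) (cyl \<Lambda> s) \<partial>\<nu>)"
      using a assms False sets.top[of \<nu>] measurable_Fsig_imp_Omega[OF measurable_gamma_Fsig]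
        prob_space.prob_le_1[OF prob_space_prob_on_Omega[OF prob_on_Omega_gamma]]
      by (intro integral_indicator_mult_bounds(1)[OF prob_space_nu, where b=1])
        (auto simp: less_imp_le measurable_prob_on_Omega[OF prob_on_Omega_nu])
    ultimately show ?thesis using prob_space.prob_space[OF prob_space_nu] by simp
  qed
  with a(1) show ?thesis by (rule that)
qed

lemma cyl_measure_pos: "finite \<Lambda> \<Longrightarrow> 0 < measure \<nu> (cyl \<Lambda> s)"
  by (metis cyl_measure_lower_bound less_le_trans)

definition a0 :: real where
  "a0 = (SOME a. 0 < a \<and> (\<forall>\<zeta> \<omega>. a < gamma0 \<gamma> \<zeta> \<omega>))"

lemma a0: "0 < a0" "a0 < gamma0 \<gamma> \<zeta> \<omega>"
proof -
  obtain a where "0 < a" "\<And>\<sigma> \<eta>. a < measure (\<gamma> {0} \<eta>) (cyl {0} \<sigma>)"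
    using nonnull_lower_bound[of "{0}"] by auto
  then have "\<exists>a. 0 < a \<and> (\<forall>\<zeta> \<omega>. a < gamma0 \<gamma> \<zeta> \<omega>)"
    by (auto simp: gamma0_def cyl_0)
  then have "0 < a0 \<and> (\<forall>\<zeta> \<omega>. a0 < gamma0 \<gamma> \<zeta> \<omega>)"
    unfolding a0_def by (rule someI_ex)
  then show "0 < a0" "a0 < gamma0 \<gamma> \<zeta> \<omega>" by auto
qed

lemma gamma0_pos: "0 < gamma0 \<gamma> \<zeta> \<omega>"
  using a0 by (meson less_trans)

lemma gamma0_nonzero: "gamma0 \<gamma> \<zeta> \<omega> \<noteq> 0"
  using gamma0_pos[of \<zeta> \<omega>] by simp

lemma gamma0_le_1: "gamma0 \<gamma> \<zeta> \<omega> \<le> 1"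
  unfolding gamma0_def by (rule prob_space.prob_le_1[OF prob_space_prob_on_Omega[OF prob_on_Omega_gamma]]) auto

lemma measurable_gamma0_Fsig: "(\<lambda>\<omega>. gamma0 \<gamma> \<zeta> \<omega>) \<in> borel_measurable (Fsig (- {0}))"
  unfolding gamma0_def cyl_0 by (rule measurable_gamma_Fsig) auto

lemma measurable_gamma0: "(\<lambda>\<omega>. gamma0 \<gamma> \<zeta> \<omega>) \<in> borel_measurable \<nu>"
  by (rule measurable_prob_on_Omega[OF prob_on_Omega_nu measurable_Fsig_imp_Omega[OF measurable_gamma0_Fsig]])

lemma measurable_gamma0_comp:
  assumes "(\<lambda>p. k p 0) \<in> measurable N (count_space UNIV)" and "h \<in> measurable N Omega"
  shows "(\<lambda>p. gamma0 \<gamma> (k p) (h p)) \<in> borel_measurable N"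
proof -
  have "(\<lambda>p. gamma0 \<gamma> (\<lambda>_. k p 0) (h p)) \<in> borel_measurable N"
  proof (rule measurable_compose_countable'[where I=UNIV, OF _ assms(1)])
    show "(\<lambda>p. gamma0 \<gamma> (\<lambda>_. a) (h p)) \<in> borel_measurable N" for a
      using assms(2) measurable_Fsig_imp_Omega[OF measurable_gamma0_Fsig] by (rule measurable_compose)
  qed simp
  then show ?thesis by (simp add: gamma0_def)
qed

lemma gamma0_eq_if_agree: "\<forall>x. x \<noteq> 0 \<longrightarrow> \<omega> x = \<omega>' x \<Longrightarrow> gamma0 \<gamma> \<zeta> \<omega> = gamma0 \<gamma> \<zeta> \<omega>'"
  by (rule borel_measurable_Fsig_eq[OF measurable_gamma0_Fsig]) auto

lemma cyl_measure_eq_integral_gamma0: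
  assumes "finite \<Delta>" "0 \<in> \<Delta>"
  shows "measure \<nu> (cyl \<Delta> \<eta>) = (\<integral>\<omega>. indicator (cyl (\<Delta> - {0}) \<eta>) \<omega> * gamma0 \<gamma> \<eta> \<omega> \<partial>\<nu>)"
  unfolding cyl_insert_0[OF assms(2)] gamma0_def
  using assms by (intro gibbs_integral_indicator cyl_in_sets_Fsig) (auto simp: cyl_0)

lemma cyl_measure_bounds:
  assumes "finite \<Delta>" "0 \<in> \<Delta>"
  shows "a0 * measure \<nu> (cyl (\<Delta> - {0}) \<eta>) \<le> measure \<nu> (cyl \<Delta> \<eta>)"
    and "measure \<nu> (cyl \<Delta> \<eta>) \<le> measure \<nu> (cyl (\<Delta> - {0}) \<eta>)"
proof -
  have C: "cyl (\<Delta> - {0}) \<eta> \<in> sets \<nu>" using assms(1) by (simp add: sets_nu)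
  have "a0 \<le> gamma0 \<gamma> \<eta> \<omega>" "gamma0 \<gamma> \<eta> \<omega> \<le> 1" for \<omega>
    using a0(2) gamma0_le_1 by (auto intro: less_imp_le)
  from integral_indicator_mult_bounds[OF prob_space_nu measurable_gamma0 C this]
  show "a0 * measure \<nu> (cyl (\<Delta> - {0}) \<eta>) \<le> measure \<nu> (cyl \<Delta> \<eta>)"
    and "measure \<nu> (cyl \<Delta> \<eta>) \<le> measure \<nu> (cyl (\<Delta> - {0}) \<eta>)"
    by (simp_all add: cyl_measure_eq_integral_gamma0[OF assms])
qed

lemma limitin_gamma0:
  assumes "\<eta> \<in> Omega_gamma \<gamma>"
  shows "limitin euclideanreal (\<lambda>\<omega>. gamma0 \<gamma> \<zeta> \<omega>) (gamma0 \<gamma> \<zeta> \<eta>) (atin prod_top \<eta>)"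
proof -
  define f where "f = (indicator (cyl {0} \<zeta>) :: _ \<Rightarrow> real)"
  have "local_fun f"
    unfolding local_fun_def f_def by (intro exI[of _ "{0}"] conjI borel_measurable_indicator cyl_in_sets_Fsig) auto
  then have "limitin euclideanreal (\<lambda>\<omega>. \<integral>z. f z \<partial>\<gamma> {0} \<omega>) (\<integral>z. f z \<partial>\<gamma> {0} \<eta>) (atin prod_top \<eta>)"
    using assms unfolding Omega_gamma_def by blast
  moreover have "(\<integral>z. f z \<partial>\<gamma> {0} \<omega>) = gamma0 \<gamma> \<zeta> \<omega>" for \<omega>
    using prob_on_Omega_gamma[of "{0}" \<omega>]
    by (simp add: f_def gamma0_def cyl_0 prob_on_Omega_def)
  ultimately show ?thesis by simp
qed

lemma gamma0_local_approx:
  assumes "\<eta> \<in> Omega_gamma \<gamma>" and "\<epsilon> > 0"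
  obtains K where "finite K" "\<And>\<omega>. \<forall>x\<in>K - {0}. \<omega> x = \<eta> x \<Longrightarrow> \<bar>gamma0 \<gamma> \<zeta> \<omega> - gamma0 \<gamma> \<zeta> \<eta>\<bar> < \<epsilon>"
proof -
  obtain K where K: "finite K" "\<And>\<omega>. \<forall>x\<in>K. \<omega> x = \<eta> x \<Longrightarrow> \<bar>gamma0 \<gamma> \<zeta> \<omega> - gamma0 \<gamma> \<zeta> \<eta>\<bar> < \<epsilon>"
    using limitin_prod_top_imp_local[OF limitin_gamma0[OF assms(1)] assms(2)] by blast
  have "\<bar>gamma0 \<gamma> \<zeta> \<omega> - gamma0 \<gamma> \<zeta> \<eta>\<bar> < \<epsilon>" if "\<forall>x\<in>K - {0}. \<omega> x = \<eta> x" for \<omega>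
  proof -
    have "gamma0 \<gamma> \<zeta> \<omega> = gamma0 \<gamma> \<zeta> (fun_upd \<omega> 0 (\<eta> 0))" by (rule gamma0_eq_if_agree) simp
    then show ?thesis using that K(2)[of "fun_upd \<omega> 0 (\<eta> 0)"] by simp
  qed
  with K(1) show ?thesis by (rule that)
qed

lemma cyl_ratio_tendsto_gamma0:
  assumes \<eta>: "\<eta> \<in> Omega_gamma \<gamma>" and \<Delta>: "\<And>j. finite (\<Delta> j)" "\<And>j. Lam j \<subseteq> \<Delta> j"
  shows "(\<lambda>j. measure \<nu> (cyl (\<Delta> j - {0}) \<eta> \<inter> {\<omega>. \<omega> 0 = \<zeta> 0}) / measure \<nu> (cyl (\<Delta> j - {0}) \<eta>))
    \<longlonglongrightarrow> gamma0 \<gamma> \<zeta> \<eta>"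
proof (rule LIMSEQ_I)
  fix r :: real assume r: "0 < r"
  obtain K where K: "finite K" "\<And>\<omega>. \<forall>x\<in>K - {0}. \<omega> x = \<eta> x \<Longrightarrow> \<bar>gamma0 \<gamma> \<zeta> \<omega> - gamma0 \<gamma> \<zeta> \<eta>\<bar> < r / 2"
    using gamma0_local_approx[OF \<eta>, of "r / 2"] r by auto
  obtain N where N: "K \<subseteq> Lam N" using finite_subset_Lam[OF K(1)] by blast
  have "\<bar>measure \<nu> (cyl (\<Delta> j - {0}) \<eta> \<inter> {\<omega>. \<omega> 0 = \<zeta> 0}) / measure \<nu> (cyl (\<Delta> j - {0}) \<eta>)
      - gamma0 \<gamma> \<zeta> \<eta>\<bar> < r" if "N \<le> j" for j
  proof -
    define C where "C = cyl (\<Delta> j - {0}) \<eta>"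
    define g where "g = gamma0 \<gamma> \<zeta> \<eta>"
    have C: "C \<in> sets (Fsig (- {0}))" "C \<in> sets \<nu>" "0 < measure \<nu> C"
      unfolding C_def using \<Delta>(1) sets_Fsig_subset by (auto intro: cyl_in_sets_Fsig cyl_measure_pos)
    have "K \<subseteq> \<Delta> j" using N Lam_mono[OF that] \<Delta>(2)[of j] by blast
    then have near_abs: "\<bar>gamma0 \<gamma> \<zeta> \<omega> - g\<bar> < r / 2" if "\<omega> \<in> C" for \<omega>
      using that K(2)[of \<omega>] unfolding g_def C_def cyl_def by force
    have near: "g - r / 2 \<le> gamma0 \<gamma> \<zeta> \<omega>" "gamma0 \<gamma> \<zeta> \<omega> \<le> g + r / 2" if "\<omega> \<in> C" for \<omega>
      using near_abs[OF that] unfolding abs_less_iff by linarith+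
    have eq: "measure \<nu> (C \<inter> {\<omega>. \<omega> 0 = \<zeta> 0}) = (\<integral>\<omega>. indicator C \<omega> * gamma0 \<gamma> \<zeta> \<omega> \<partial>\<nu>)"
      unfolding gamma0_def cyl_0 using C by (intro gibbs_integral_indicator) auto
    note bounds = integral_indicator_mult_bounds[OF prob_space_nu measurable_gamma0 C(2) near]
    have "(g - r / 2) * measure \<nu> C \<le> measure \<nu> (C \<inter> {\<omega>. \<omega> 0 = \<zeta> 0})"
      unfolding eq by (rule bounds(1))
    moreover have "measure \<nu> (C \<inter> {\<omega>. \<omega> 0 = \<zeta> 0}) \<le> (g + r / 2) * measure \<nu> C"
      unfolding eq by (rule bounds(2))
    ultimately have "g - r / 2 \<le> measure \<nu> (C \<inter> {\<omega>. \<omega> 0 = \<zeta> 0}) / measure \<nu> C"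
      "measure \<nu> (C \<inter> {\<omega>. \<omega> 0 = \<zeta> 0}) / measure \<nu> C \<le> g + r / 2"
      using C(3) by (simp_all add: pos_le_divide_eq pos_divide_le_eq)
    then show ?thesis using r unfolding C_def g_def abs_less_iff by linarith
  qed
  then show "\<exists>N. \<forall>j\<ge>N. norm (measure \<nu> (cyl (\<Delta> j - {0}) \<eta> \<inter> {\<omega>. \<omega> 0 = \<zeta> 0})
      / measure \<nu> (cyl (\<Delta> j - {0}) \<eta>) - gamma0 \<gamma> \<zeta> \<eta>) < r" by auto
qed

lemma cyl_measure_translate:
  assumes "finite \<Lambda>"
  shows "measure \<nu> (cyl \<Lambda> \<eta>) = measure \<nu> (cyl ((\<lambda>y. y - x) ` \<Lambda>) (shift x \<eta>))"
proof -
  have "shift x -` cyl ((\<lambda>y. y - x) ` \<Lambda>) (shift x \<eta>) = cyl \<Lambda> \<eta>"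
    by (auto simp: cyl_def shift_def)
  moreover have "measure (distr \<nu> Omega (shift x)) (cyl ((\<lambda>y. y - x) ` \<Lambda>) (shift x \<eta>))
      = measure \<nu> (shift x -` cyl ((\<lambda>y. y - x) ` \<Lambda>) (shift x \<eta>) \<inter> space \<nu>)"
    using assms by (intro measure_distr measurable_prob_on_Omega[OF prob_on_Omega_nu measurable_shift]) auto
  ultimately show ?thesis using inv by (simp add: inv_measure_def)
qed

lemma ln_cyl_ratio_tendsto:
  assumes \<eta>: "glue \<sigma> \<xi> \<in> Omega_gamma \<gamma>" and \<Delta>: "\<And>j. finite (\<Delta> j)" "\<And>j. Lam j \<subseteq> \<Delta> j"
  shows "(\<lambda>j. ln_cyl_ratio \<nu> (\<Delta> j) (\<xi>, \<sigma>)) \<longlonglongrightarrow> ln_gamma0_ratio \<gamma> (\<xi>, \<sigma>)"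
proof -
  define \<eta> where "\<eta> = glue \<sigma> \<xi>"
  define C where "C j = cyl (\<Delta> j - {0}) \<eta>" for j
  define R where "R \<zeta> j = measure \<nu> (C j \<inter> {\<omega>. \<omega> 0 = \<zeta> 0}) / measure \<nu> (C j)"
    for \<zeta> :: "int^('d::{finite,linorder}) \<Rightarrow> 'e" and j
  have z: "0 \<in> \<Delta> j" for j using \<Delta>(2)[of j] zero_in_Lam by blast
  have "cyl (\<Delta> j - {0}) (glue_lt \<sigma> \<xi>) = C j" for j
    unfolding C_def \<eta>_def by (rule cyl_cong) (simp add: glue_lt_eq_glue)
  then have cyls: "cyl (\<Delta> j) (glue \<sigma> \<xi>) = C j \<inter> {\<omega>. \<omega> 0 = \<sigma> 0}"
    "cyl (\<Delta> j) (glue_lt \<sigma> \<xi>) = C j \<inter> {\<omega>. \<omega> 0 = \<xi> 0}" for j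
    using cyl_insert_0[OF z[of j], of "glue \<sigma> \<xi>"] cyl_insert_0[OF z[of j], of "glue_lt \<sigma> \<xi>"]
    by (simp_all add: C_def \<eta>_def)
  have pos: "0 < measure \<nu> (C j)" "0 < measure \<nu> (C j \<inter> {\<omega>. \<omega> 0 = \<sigma> 0})"
    "0 < measure \<nu> (C j \<inter> {\<omega>. \<omega> 0 = \<xi> 0})" for j
  proof -
    have "0 < measure \<nu> (cyl (\<Delta> j) (glue \<sigma> \<xi>))" "0 < measure \<nu> (cyl (\<Delta> j) (glue_lt \<sigma> \<xi>))"
      "0 < measure \<nu> (C j)"
      using \<Delta>(1)[of j] by (simp_all add: C_def cyl_measure_pos)
    then show "0 < measure \<nu> (C j)" "0 < measure \<nu> (C j \<inter> {\<omega>. \<omega> 0 = \<sigma> 0})"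
      "0 < measure \<nu> (C j \<inter> {\<omega>. \<omega> 0 = \<xi> 0})"
      by (simp_all only: cyls)
  qed
  have "ln_cyl_ratio \<nu> (\<Delta> j) (\<xi>, \<sigma>) = ln (R \<sigma> j) - ln (R \<xi> j)" for j
    using pos[of j] by (simp add: ln_cyl_ratio_def ln_cyl_def R_def cyls ln_div)
  moreover have "(\<lambda>j. ln (R \<sigma> j) - ln (R \<xi> j)) \<longlonglongrightarrow> ln (gamma0 \<gamma> \<sigma> \<eta>) - ln (gamma0 \<gamma> \<xi> \<eta>)"
    unfolding R_def C_def
    by (intro tendsto_diff tendsto_ln cyl_ratio_tendsto_gamma0 \<Delta>) (simp_all add: \<eta>_def \<eta> gamma0_nonzero)
  moreover have "gamma0 \<gamma> (glue \<sigma> \<xi>) = gamma0 \<gamma> \<sigma>" by (simp add: gamma0_def fun_eq_iff)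
  ultimately show ?thesis
    using gamma0_pos by (simp add: ln_gamma0_ratio_def \<eta>_def ln_div gamma0_nonzero)
qed

lemma abs_ln_cyl_ratio_le:
  assumes "finite \<Delta>" "0 \<in> \<Delta>"
  shows "\<bar>ln_cyl_ratio \<nu> \<Delta> p\<bar> \<le> - ln a0"
proof -
  define c where "c = measure \<nu> (cyl (\<Delta> - {0}) (glue (snd p) (fst p)))"
  have "cyl (\<Delta> - {0}) (glue_lt (snd p) (fst p)) = cyl (\<Delta> - {0}) (glue (snd p) (fst p))"
    by (rule cyl_cong) (simp add: glue_lt_eq_glue)
  moreover have "0 < c" unfolding c_def using assms by (intro cyl_measure_pos) auto
  ultimately show ?thesis
    unfolding ln_cyl_ratio_def ln_cyl_def
    using cyl_measure_bounds[OF assms, of "glue (snd p) (fst p)"]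
      cyl_measure_bounds[OF assms, of "glue_lt (snd p) (fst p)"]
    by (intro abs_ln_diff_le[OF a0(1), of c]) (simp_all add: c_def)
qed

lemma abs_ln_gamma0_ratio_le: "\<bar>ln_gamma0_ratio \<gamma> p\<bar> \<le> - ln a0"
proof -
  have "\<bar>ln (gamma0 \<gamma> (glue (snd p) (fst p)) (glue (snd p) (fst p)))
      - ln (gamma0 \<gamma> (fst p) (glue (snd p) (fst p)))\<bar> \<le> - ln a0"
    by (rule abs_ln_diff_le[OF a0(1), of 1]) (simp_all add: less_imp_le a0 gamma0_le_1)
  then show ?thesis using gamma0_pos by (simp add: ln_gamma0_ratio_def ln_div gamma0_nonzero)
qed

lemma borel_measurable_ln_cyl_ratio:
  assumes "finite \<Delta>"
  shows "ln_cyl_ratio \<nu> \<Delta> \<in> borel_measurable (Omega \<Otimes>\<^sub>M Omega)"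
proof (rule borel_measurable_pair_local[OF assms])
  fix p p' :: "(int^('d::{finite,linorder}) \<Rightarrow> 'e) \<times> (int^('d::{finite,linorder}) \<Rightarrow> 'e)"
  assume "\<forall>x\<in>\<Delta>. fst p x = fst p' x \<and> snd p x = snd p' x"
  then have "cyl \<Delta> (glue (snd p) (fst p)) = cyl \<Delta> (glue (snd p') (fst p'))"
    "cyl \<Delta> (glue_lt (snd p) (fst p)) = cyl \<Delta> (glue_lt (snd p') (fst p'))"
    by (auto intro!: cyl_cong simp: glue_def glue_lt_def)
  then show "ln_cyl_ratio \<nu> \<Delta> p = ln_cyl_ratio \<nu> \<Delta> p'" by (simp add: ln_cyl_ratio_def ln_cyl_def)
qed

lemma borel_measurable_ln_gamma0_ratio: "ln_gamma0_ratio \<gamma> \<in> borel_measurable (Omega \<Otimes>\<^sub>M Omega)"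
proof -
  have "(\<lambda>p. glue (snd p) (fst p) 0) \<in> measurable (Omega \<Otimes>\<^sub>M Omega) (count_space UNIV)"
    "(\<lambda>p. fst p 0) \<in> measurable (Omega \<Otimes>\<^sub>M Omega) (count_space UNIV)"
    by (simp_all add: measurable_compose[OF measurable_snd measurable_Omega_coord]
        measurable_compose[OF measurable_fst measurable_Omega_coord])
  then show ?thesis
    unfolding ln_gamma0_ratio_def
    by (intro borel_measurable_ln borel_measurable_divide measurable_gamma0_comp measurable_glue)
qed

lemma ln_cyl_diff_eq_sum:
  assumes \<Lambda>: "finite \<Lambda>"
  shows "ln_cyl \<nu> \<Lambda> \<sigma> - ln_cyl \<nu> \<Lambda> \<xi>
    = (\<Sum>x\<in>\<Lambda>. ln_cyl_ratio \<nu> ((\<lambda>y. y - x) ` \<Lambda>) (shift x \<xi>, shift x \<sigma>))"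
proof -
  define G where "G U = ln_cyl \<nu> \<Lambda> (\<lambda>y. if y \<in> U then \<sigma> y else \<xi> y)" for U
  have G: "G {y\<in>\<Lambda>. P y} = ln_cyl \<nu> \<Lambda> (\<lambda>y. if P y then \<sigma> y else \<xi> y)" for P
    unfolding G_def by (rule ln_cyl_agree) simp
  have translate: "ln_cyl \<nu> \<Lambda> \<eta> = ln_cyl \<nu> ((\<lambda>y. y - x) ` \<Lambda>) (shift x \<eta>)" for x \<eta>
    unfolding ln_cyl_def cyl_measure_translate[OF \<Lambda>, of \<eta> x] ..
  have "G {y\<in>\<Lambda>. lex_le y x} - G {y\<in>\<Lambda>. lex_le y x \<and> y \<noteq> x}
      = ln_cyl_ratio \<nu> ((\<lambda>y. y - x) ` \<Lambda>) (shift x \<xi>, shift x \<sigma>)" for x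
    unfolding G translate[of _ x] shift_glue shift_glue_lt by (simp add: ln_cyl_ratio_def)
  moreover have "G \<Lambda> = ln_cyl \<nu> \<Lambda> \<sigma>" unfolding G_def by (rule ln_cyl_agree) simp
  moreover have "G {} = ln_cyl \<nu> \<Lambda> \<xi>" by (simp add: G_def)
  ultimately show ?thesis using sum_lex_telescope[OF \<Lambda>, of G] by simp
qed

lemma rel_entropy_seq_eq:
  assumes \<mu>: "prob_on_Omega \<mu>"
  shows "rel_entropy_seq \<mu> \<nu> n
    = energy_seq \<mu> \<nu> n - block_entropy \<mu> (Lam n) / card (Lam n :: (int^('d::{finite,linorder})) set)"
proof -
  have "measure \<mu> (cyl (Lam n) s) * ln (measure \<mu> (cyl (Lam n) s) / measure \<nu> (cyl (Lam n) s))
      = measure \<mu> (cyl (Lam n) s) * ln (measure \<mu> (cyl (Lam n) s)) - measure \<mu> (cyl (Lam n) s) * ln_cyl \<nu> (Lam n) s" for s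
  proof (cases "measure \<mu> (cyl (Lam n) s) = 0")
    case False
    then have "0 < measure \<mu> (cyl (Lam n) s)" using measure_nonneg[of \<mu>] by (simp add: order_less_le)
    then show ?thesis using cyl_measure_pos[of "Lam n" s] by (simp add: ln_div ln_cyl_def algebra_simps)
  qed simp
  then have "hLam (Lam n) \<mu> \<nu> = (\<Sum>s\<in>configs (Lam n). measure \<mu> (cyl (Lam n) s) * ln (measure \<mu> (cyl (Lam n) s)))
      - (\<Sum>s\<in>configs (Lam n). measure \<mu> (cyl (Lam n) s) * ln_cyl \<nu> (Lam n) s)"
    unfolding hLam_def by (simp only: sum_subtractf)
  also have "(\<Sum>s\<in>configs (Lam n). measure \<mu> (cyl (Lam n) s) * ln_cyl \<nu> (Lam n) s)
      = (\<integral>\<omega>. ln_cyl \<nu> (Lam n) \<omega> \<partial>\<mu>)"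
    by (rule integral_local_eq_sum[OF \<mu> finite_Lam, symmetric]) (rule ln_cyl_agree)
  finally have "hLam (Lam n) \<mu> \<nu> = - block_entropy \<mu> (Lam n) - (\<integral>\<omega>. ln_cyl \<nu> (Lam n) \<omega> \<partial>\<mu>)"
    by (simp add: block_entropy_eq[OF \<mu>])
  then show ?thesis
    by (simp add: rel_entropy_seq_def energy_seq_def ln_cyl_def diff_divide_distrib)
qed

end

section \<open>The energy difference\<close>

lemma convergent_iff_if_diff_tendsto:
  fixes f g :: "nat \<Rightarrow> real"
  assumes diff: "(\<lambda>n. f n - g n) \<longlonglongrightarrow> c"
  shows "convergent f \<longleftrightarrow> convergent g"
    and "convergent g \<Longrightarrow> lim f = lim g + c"
proof -
  have "convergent (\<lambda>n. f n - g n)" using diff by (auto simp: convergent_def)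
  show "convergent f \<longleftrightarrow> convergent g"
  proof
    assume "convergent f"
    then have "convergent (\<lambda>n. f n - (f n - g n))"
      using \<open>convergent (\<lambda>n. f n - g n)\<close> by (rule convergent_diff)
    then show "convergent g" by simp
  next
    assume "convergent g"
    then have "convergent (\<lambda>n. g n + (f n - g n))"
      using \<open>convergent (\<lambda>n. f n - g n)\<close> by (rule convergent_add)
    then show "convergent f" by simp
  qed
  assume "convergent g"
  then have "(\<lambda>n. g n + (f n - g n)) \<longlonglongrightarrow> lim g + c"
    using diff by (intro tendsto_add) (simp_all add: convergent_LIMSEQ_iff)
  then show "lim f = lim g + c" by (simp add: limI)
qed

definition boundary_integral ::
  "((int^('d::{finite,linorder})) set \<Rightarrow> (int^('d::{finite,linorder}) \<Rightarrow> 'e) \<Rightarrow> (int^('d::{finite,linorder}) \<Rightarrow> 'e) measure)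
    \<Rightarrow> (int^('d::{finite,linorder}) \<Rightarrow> 'e) measure \<Rightarrow> (int^('d::{finite,linorder}) \<Rightarrow> 'e) measure \<Rightarrow> real" where
  "boundary_integral \<gamma> \<mu> lam =
    (\<integral>\<xi>. (\<integral>\<sigma>. ln (gamma0 \<gamma> (glue \<sigma> \<xi>) (glue \<sigma> \<xi>) / gamma0 \<gamma> \<xi> (glue \<sigma> \<xi>)) \<partial>\<mu>) \<partial>lam)"

locale rel_entropy_setting = inv_gibbs \<gamma> \<nu>
  for \<gamma> :: "(int^('d::{finite,linorder})) set \<Rightarrow> (int^('d::{finite,linorder}) \<Rightarrow> 'e::finite)
      \<Rightarrow> (int^('d::{finite,linorder}) \<Rightarrow> 'e::finite) measure"
    and \<nu> :: "(int^('d::{finite,linorder}) \<Rightarrow> 'e::finite) measure" +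
  fixes \<mu> lam :: "(int^('d::{finite,linorder}) \<Rightarrow> 'e::finite) measure"
  assumes mu_inv: "inv_measure \<mu>" and lam_inv: "inv_measure lam"
    and C1': "AE p in lam \<Otimes>\<^sub>M \<mu>. glue (snd p) (fst p) \<in> Omega_gamma \<gamma>"
begin

abbreviation P where "P \<equiv> lam \<Otimes>\<^sub>M \<mu>"

lemma prob_on_Omega_mu: "prob_on_Omega \<mu>"
  using mu_inv by (simp add: inv_measure_def)

lemma prob_on_Omega_lam: "prob_on_Omega lam"
  using lam_inv by (simp add: inv_measure_def)

sublocale pair: pair_prob_space lam \<mu>
  using prob_space_prob_on_Omega[OF prob_on_Omega_lam] prob_space_prob_on_Omega[OF prob_on_Omega_mu]
  by (simp add: pair_prob_space_def pair_sigma_finite_def prob_space_imp_sigma_finite)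

lemma sets_P: "sets P = sets (Omega \<Otimes>\<^sub>M Omega)"
  using prob_on_Omega_lam prob_on_Omega_mu by (intro sets_pair_measure_cong) (auto simp: prob_on_Omega_def)

lemma measurable_P: "f \<in> borel_measurable (Omega \<Otimes>\<^sub>M Omega) \<Longrightarrow> f \<in> borel_measurable P"
  using sets_P measurable_cong_sets by blast

lemma integrable_P_bounded:
  fixes f :: "_ \<Rightarrow> real"
  assumes "f \<in> borel_measurable (Omega \<Otimes>\<^sub>M Omega)" and "\<And>p. \<bar>f p\<bar> \<le> B"
  shows "integrable P f"
  using assms by (intro pair.P.integrable_const_bound[where B=B] measurable_P) auto

lemma integral_P_snd:
  fixes f :: "_ \<Rightarrow> real"
  assumes "f \<in> borel_measurable Omega" and "\<And>\<omega>. \<bar>f \<omega>\<bar> \<le> B"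
  shows "(\<integral>p. f (snd p) \<partial>P) = (\<integral>\<sigma>. f \<sigma> \<partial>\<mu>)"
proof -
  have "integrable P (\<lambda>p. f (snd p))"
    using assms by (intro integrable_P_bounded[where B=B]) auto
  then show ?thesis by (simp add: pair.integral_fst'[symmetric] pair.M1.prob_space)
qed

lemma integral_P_fst:
  fixes f :: "_ \<Rightarrow> real"
  assumes "f \<in> borel_measurable Omega" and "\<And>\<omega>. \<bar>f \<omega>\<bar> \<le> B"
  shows "(\<integral>p. f (fst p) \<partial>P) = (\<integral>\<xi>. f \<xi> \<partial>lam)"
proof -
  have "integrable P (\<lambda>p. f (fst p))"
    using assms by (intro integrable_P_bounded[where B=B]) auto
  then show ?thesis by (simp add: pair.integral_fst'[symmetric] pair.M2.prob_space)
qed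

lemma integral_P_shift:
  fixes f :: "_ \<Rightarrow> real"
  assumes f: "f \<in> borel_measurable (Omega \<Otimes>\<^sub>M Omega)"
  shows "(\<integral>p. f (shift x (fst p), shift x (snd p)) \<partial>P) = (\<integral>p. f p \<partial>P)"
proof -
  let ?T = "\<lambda>p. (shift x (fst p), shift x (snd p))"
  have T: "?T \<in> measurable (Omega \<Otimes>\<^sub>M Omega) (Omega \<Otimes>\<^sub>M Omega)"
    using measurable_shift by measurable
  have "distr P (Omega \<Otimes>\<^sub>M Omega) ?T = distr lam Omega (shift x) \<Otimes>\<^sub>M distr \<mu> Omega (shift x)"
    using pair_measure_distr[OF measurable_prob_on_Omega[OF prob_on_Omega_lam measurable_shift]
        measurable_prob_on_Omega[OF prob_on_Omega_mu measurable_shift]] mu_inv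
      pair.M2.sigma_finite_measure_axioms
    by (simp add: inv_measure_def case_prod_beta')
  also have "\<dots> = P" using mu_inv lam_inv by (simp add: inv_measure_def)
  finally have invariant: "distr P (Omega \<Otimes>\<^sub>M Omega) ?T = P" .
  have "?T \<in> measurable P (Omega \<Otimes>\<^sub>M Omega)"
    using T by (simp only: measurable_cong_sets[OF sets_P refl])
  then have "(\<integral>p. f (?T p) \<partial>P) = (\<integral>p. f p \<partial>distr P (Omega \<Otimes>\<^sub>M Omega) ?T)"
    by (rule integral_distr[OF _ f, symmetric])
  then show ?thesis unfolding invariant .
qed

definition ln_cyl_ratio_error :: "(int^('d::{finite,linorder})) set \<Rightarrow> real" where
  "ln_cyl_ratio_error \<Delta> = (\<integral>p. \<bar>ln_cyl_ratio \<nu> \<Delta> p - ln_gamma0_ratio \<gamma> p\<bar> \<partial>P)"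

lemma integrable_ln_gamma0_ratio: "integrable P (ln_gamma0_ratio \<gamma>)"
  by (rule integrable_P_bounded[OF borel_measurable_ln_gamma0_ratio abs_ln_gamma0_ratio_le])

lemma integrable_ln_cyl_ratio: "finite \<Delta> \<Longrightarrow> 0 \<in> \<Delta> \<Longrightarrow> integrable P (ln_cyl_ratio \<nu> \<Delta>)"
  by (intro integrable_P_bounded[OF borel_measurable_ln_cyl_ratio abs_ln_cyl_ratio_le])

lemma integral_ln_gamma0_ratio: "(\<integral>p. ln_gamma0_ratio \<gamma> p \<partial>P) = boundary_integral \<gamma> \<mu> lam"
  using pair.integral_fst'[OF integrable_ln_gamma0_ratio]
  by (simp add: ln_gamma0_ratio_def[abs_def] boundary_integral_def)

lemma ln_cyl_ratio_error_le:
  assumes "finite \<Delta>" "0 \<in> \<Delta>"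
  shows "ln_cyl_ratio_error \<Delta> \<le> 2 * - ln a0"
proof -
  have "\<bar>ln_cyl_ratio \<nu> \<Delta> p - ln_gamma0_ratio \<gamma> p\<bar> \<le> 2 * - ln a0" for p
    using abs_triangle_ineq4[of "ln_cyl_ratio \<nu> \<Delta> p" "ln_gamma0_ratio \<gamma> p"]
      abs_ln_cyl_ratio_le[OF assms, of p] abs_ln_gamma0_ratio_le[of p]
    by simp
  then have "ln_cyl_ratio_error \<Delta> \<le> (\<integral>p. 2 * - ln a0 \<partial>P)"
    unfolding ln_cyl_ratio_error_def using assms
    by (intro integral_mono integrable_abs Bochner_Integration.integrable_diff integrable_ln_cyl_ratio
        integrable_ln_gamma0_ratio) auto
  then show ?thesis by (simp add: pair.P.prob_space)
qed

lemma tendsto_ln_cyl_ratio_error: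
  assumes \<Delta>: "\<And>j. finite (\<Delta> j)" "\<And>j. Lam j \<subseteq> \<Delta> j"
  shows "(\<lambda>j. ln_cyl_ratio_error (\<Delta> j)) \<longlonglongrightarrow> 0"
proof -
  have "(\<lambda>j. \<integral>p. \<bar>ln_cyl_ratio \<nu> (\<Delta> j) p - ln_gamma0_ratio \<gamma> p\<bar> \<partial>P) \<longlonglongrightarrow> (\<integral>p. 0 \<partial>P)"
  proof (rule integral_dominated_convergence[where w="\<lambda>_. 2 * - ln a0"])
    show "(\<lambda>p. \<bar>ln_cyl_ratio \<nu> (\<Delta> j) p - ln_gamma0_ratio \<gamma> p\<bar>) \<in> borel_measurable P" for j
      using \<Delta>(1) by (intro measurable_P borel_measurable_abs borel_measurable_diff
          borel_measurable_ln_cyl_ratio borel_measurable_ln_gamma0_ratio)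
    show "AE p in P. (\<lambda>j. \<bar>ln_cyl_ratio \<nu> (\<Delta> j) p - ln_gamma0_ratio \<gamma> p\<bar>) \<longlonglongrightarrow> 0"
      using C1'
    proof eventually_elim
      case (elim p)
      then have "(\<lambda>j. ln_cyl_ratio \<nu> (\<Delta> j) p) \<longlonglongrightarrow> ln_gamma0_ratio \<gamma> p"
        using ln_cyl_ratio_tendsto[OF _ \<Delta>, of "snd p" "fst p"] by simp
      then show ?case by (intro tendsto_rabs_zero) (simp add: LIM_zero)
    qed
    show "AE p in P. norm \<bar>ln_cyl_ratio \<nu> (\<Delta> j) p - ln_gamma0_ratio \<gamma> p\<bar> \<le> 2 * - ln a0" for j
    proof (intro AE_I2)
      fix p
      have "0 \<in> \<Delta> j" using \<Delta>(2)[of j] zero_in_Lam by blast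
      then show "norm \<bar>ln_cyl_ratio \<nu> (\<Delta> j) p - ln_gamma0_ratio \<gamma> p\<bar> \<le> 2 * - ln a0"
        using abs_ln_cyl_ratio_le[OF \<Delta>(1), of j p] abs_ln_gamma0_ratio_le[of p] by simp
    qed
  qed simp_all
  then show ?thesis by (simp add: ln_cyl_ratio_error_def)
qed

lemma ln_cyl_ratio_error_approx:
  assumes "0 < \<epsilon>"
  obtains k where "\<And>\<Delta>. finite \<Delta> \<Longrightarrow> Lam k \<subseteq> \<Delta> \<Longrightarrow> ln_cyl_ratio_error \<Delta> < \<epsilon>"
proof -
  have "\<exists>k. \<forall>\<Delta>. finite \<Delta> \<longrightarrow> Lam k \<subseteq> \<Delta> \<longrightarrow> ln_cyl_ratio_error \<Delta> < \<epsilon>"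
  proof (rule ccontr)
    assume "\<not> ?thesis"
    then have "\<forall>k. \<exists>\<Delta>. finite \<Delta> \<and> Lam k \<subseteq> \<Delta> \<and> \<epsilon> \<le> ln_cyl_ratio_error \<Delta>"
      by (auto simp: not_less)
    then have "\<exists>\<Delta>. \<forall>k. finite (\<Delta> k) \<and> Lam k \<subseteq> \<Delta> k \<and> \<epsilon> \<le> ln_cyl_ratio_error (\<Delta> k)"
      by (rule choice)
    then obtain \<Delta> where \<Delta>: "\<And>k. finite (\<Delta> k)" "\<And>k. Lam k \<subseteq> \<Delta> k"
      "\<And>k. \<epsilon> \<le> ln_cyl_ratio_error (\<Delta> k)"
      by blast
    have "eventually (\<lambda>k. ln_cyl_ratio_error (\<Delta> k) < \<epsilon>) sequentially"
      using tendsto_ln_cyl_ratio_error[OF \<Delta>(1,2)] assms by (rule order_tendstoD(2))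
    then obtain k where "ln_cyl_ratio_error (\<Delta> k) < \<epsilon>"
      by (auto simp: eventually_sequentially)
    then show False using \<Delta>(3)[of k] by simp
  qed
  then show ?thesis using that by blast
qed

lemma integral_ln_cyl_diff_eq_sum:
  assumes \<Lambda>: "finite \<Lambda>"
  shows "(\<integral>\<sigma>. ln_cyl \<nu> \<Lambda> \<sigma> \<partial>\<mu>) - (\<integral>\<xi>. ln_cyl \<nu> \<Lambda> \<xi> \<partial>lam)
    = (\<Sum>x\<in>\<Lambda>. \<integral>p. ln_cyl_ratio \<nu> ((\<lambda>y. y - x) ` \<Lambda>) p \<partial>P)"
proof -
  obtain B where B: "\<And>\<omega>. \<bar>ln_cyl \<nu> \<Lambda> \<omega>\<bar> \<le> B" using ln_cyl_bounded[OF \<Lambda>] by blast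
  have m: "ln_cyl \<nu> \<Lambda> \<in> borel_measurable Omega" by (rule borel_measurable_ln_cyl[OF \<Lambda>])
  have "integrable P (\<lambda>p. ln_cyl \<nu> \<Lambda> (snd p))" "integrable P (\<lambda>p. ln_cyl \<nu> \<Lambda> (fst p))"
    using m B by (auto intro!: integrable_P_bounded[where B=B])
  then have "(\<integral>\<sigma>. ln_cyl \<nu> \<Lambda> \<sigma> \<partial>\<mu>) - (\<integral>\<xi>. ln_cyl \<nu> \<Lambda> \<xi> \<partial>lam)
      = (\<integral>p. ln_cyl \<nu> \<Lambda> (snd p) - ln_cyl \<nu> \<Lambda> (fst p) \<partial>P)"
    by (simp add: integral_P_snd[OF m B, symmetric] integral_P_fst[OF m B, symmetric])
  also have "\<dots> = (\<integral>p. (\<Sum>x\<in>\<Lambda>. ln_cyl_ratio \<nu> ((\<lambda>y. y - x) ` \<Lambda>) (shift x (fst p), shift x (snd p))) \<partial>P)"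
    by (simp add: ln_cyl_diff_eq_sum[OF \<Lambda>])
  also have "\<dots> = (\<Sum>x\<in>\<Lambda>. \<integral>p. ln_cyl_ratio \<nu> ((\<lambda>y. y - x) ` \<Lambda>) (shift x (fst p), shift x (snd p)) \<partial>P)"
  proof (rule Bochner_Integration.integral_sum)
    fix x assume "x \<in> \<Lambda>"
    then have "0 \<in> (\<lambda>y. y - x) ` \<Lambda>" by (rule rev_image_eqI) simp
    moreover have "(\<lambda>p. (shift x (fst p), shift x (snd p))) \<in> measurable (Omega \<Otimes>\<^sub>M Omega) (Omega \<Otimes>\<^sub>M Omega)"
      by (intro measurable_Pair measurable_compose[OF measurable_fst measurable_shift]
          measurable_compose[OF measurable_snd measurable_shift])
    then have "(\<lambda>p. ln_cyl_ratio \<nu> ((\<lambda>y. y - x) ` \<Lambda>) (shift x (fst p), shift x (snd p)))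
        \<in> borel_measurable (Omega \<Otimes>\<^sub>M Omega)"
      using \<Lambda> by (intro measurable_compose[OF _ borel_measurable_ln_cyl_ratio]) simp_all
    ultimately show "integrable P (\<lambda>p. ln_cyl_ratio \<nu> ((\<lambda>y. y - x) ` \<Lambda>) (shift x (fst p), shift x (snd p)))"
      using \<Lambda> by (intro integrable_P_bounded[where B="- ln a0"] abs_ln_cyl_ratio_le) auto
  qed
  also have "\<dots> = (\<Sum>x\<in>\<Lambda>. \<integral>p. ln_cyl_ratio \<nu> ((\<lambda>y. y - x) ` \<Lambda>) p \<partial>P)"
    using \<Lambda> by (intro sum.cong refl integral_P_shift borel_measurable_ln_cyl_ratio) simp
  finally show ?thesis .
qed

lemma zero_in_translate_Lam:
  assumes "x \<in> Lam n"
  shows "0 \<in> (\<lambda>y. y - x) ` Lam n"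
  using assms by (rule rev_image_eqI) simp

lemma abs_ln_cyl_diff_average_le:
  "\<bar>((\<integral>\<sigma>. ln_cyl \<nu> (Lam n) \<sigma> \<partial>\<mu>) - (\<integral>\<xi>. ln_cyl \<nu> (Lam n) \<xi> \<partial>lam))
      / card (Lam n :: (int^('d::{finite,linorder})) set) - boundary_integral \<gamma> \<mu> lam\<bar>
    \<le> (\<Sum>x\<in>Lam n. ln_cyl_ratio_error ((\<lambda>y. y - x) ` Lam n)) / card (Lam n :: (int^('d::{finite,linorder})) set)"
proof -
  define N where "N = real (card (Lam n :: (int^('d::{finite,linorder})) set))"
  define d where "d x = (\<integral>p. ln_cyl_ratio \<nu> ((\<lambda>y. y - x) ` Lam n) p - ln_gamma0_ratio \<gamma> p \<partial>P)" for x
  have "0 < N" using card_Lam_pos by (simp add: N_def)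
  have "(\<Sum>x\<in>Lam n. d x) = (\<Sum>x\<in>Lam n. \<integral>p. ln_cyl_ratio \<nu> ((\<lambda>y. y - x) ` Lam n) p \<partial>P)
      - N * boundary_integral \<gamma> \<mu> lam"
    using zero_in_translate_Lam
    by (simp add: d_def N_def integrable_ln_cyl_ratio integrable_ln_gamma0_ratio integral_ln_gamma0_ratio
        sum_subtractf)
  then have "((\<integral>\<sigma>. ln_cyl \<nu> (Lam n) \<sigma> \<partial>\<mu>) - (\<integral>\<xi>. ln_cyl \<nu> (Lam n) \<xi> \<partial>lam)) / N
      - boundary_integral \<gamma> \<mu> lam = (\<Sum>x\<in>Lam n. d x) / N"
    using \<open>0 < N\<close> by (simp add: integral_ln_cyl_diff_eq_sum field_simps)
  moreover have "\<bar>\<Sum>x\<in>Lam n. d x\<bar> \<le> (\<Sum>x\<in>Lam n. ln_cyl_ratio_error ((\<lambda>y. y - x) ` Lam n))"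
    unfolding d_def ln_cyl_ratio_error_def by (rule order_trans[OF sum_abs sum_mono]) (rule integral_abs_bound)
  ultimately show ?thesis
    using \<open>0 < N\<close> by (simp add: N_def abs_divide divide_right_mono)
qed

lemma tendsto_average_ln_cyl_ratio_error:
  "(\<lambda>n. (\<Sum>x\<in>Lam n. ln_cyl_ratio_error ((\<lambda>y. y - x) ` Lam n)) / card (Lam n :: (int^('d::{finite,linorder})) set))
    \<longlonglongrightarrow> 0"
proof (rule tendsto_average_Lam_0)
  show "0 \<le> ln_cyl_ratio_error ((\<lambda>y. y - x) ` Lam n)" for n x
    by (simp add: ln_cyl_ratio_error_def)
  show "ln_cyl_ratio_error ((\<lambda>y. y - x) ` Lam n) \<le> 2 * - ln a0" if "x \<in> Lam n" for n x
    using zero_in_translate_Lam[OF that] by (intro ln_cyl_ratio_error_le) auto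
  show "\<exists>k. \<forall>n\<ge>k. \<forall>x\<in>Lam (n - k). ln_cyl_ratio_error ((\<lambda>y. y - x) ` Lam n) \<le> \<epsilon>"
    if "0 < \<epsilon>" for \<epsilon>
  proof -
    obtain k where k: "\<And>\<Delta>. finite \<Delta> \<Longrightarrow> Lam k \<subseteq> \<Delta> \<Longrightarrow> ln_cyl_ratio_error \<Delta> < \<epsilon>"
      using ln_cyl_ratio_error_approx[OF \<open>0 < \<epsilon>\<close>] by blast
    have "ln_cyl_ratio_error ((\<lambda>y. y - x) ` Lam n) \<le> \<epsilon>" if "k \<le> n" "x \<in> Lam (n - k)" for n x
      using k[OF _ translate_Lam_diff_subset[OF that]] by (simp add: less_imp_le)
    then show ?thesis by blast
  qed
qed

lemma energy_seq_diff_tendsto: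
  "(\<lambda>n. energy_seq \<mu> \<nu> n - energy_seq lam \<nu> n) \<longlonglongrightarrow> - boundary_integral \<gamma> \<mu> lam"
proof -
  define D where "D n = ((\<integral>\<sigma>. ln_cyl \<nu> (Lam n) \<sigma> \<partial>\<mu>) - (\<integral>\<xi>. ln_cyl \<nu> (Lam n) \<xi> \<partial>lam))
    / card (Lam n :: (int^('d::{finite,linorder})) set)" for n
  have "(\<lambda>n. D n - boundary_integral \<gamma> \<mu> lam) \<longlonglongrightarrow> 0"
    using always_eventually[OF allI[OF abs_ln_cyl_diff_average_le[unfolded real_norm_def[symmetric]]]]
      tendsto_average_ln_cyl_ratio_error
    unfolding D_def[symmetric] by (rule Lim_null_comparison)
  then have "(\<lambda>n. - D n) \<longlonglongrightarrow> - boundary_integral \<gamma> \<mu> lam"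
    by (intro tendsto_minus) (simp add: LIM_zero_iff)
  moreover have "energy_seq \<mu> \<nu> n - energy_seq lam \<nu> n = - D n" for n
    by (simp add: D_def energy_seq_def ln_cyl_def diff_divide_distrib)
  ultimately show ?thesis by simp
qed

lemma rel_entropy_seq_minus_energy_tendsto:
  "(\<lambda>n. rel_entropy_seq \<mu> \<nu> n - energy_seq lam \<nu> n) \<longlonglongrightarrow> - boundary_integral \<gamma> \<mu> lam - ks_entropy \<mu>"
proof -
  have "(\<lambda>n. rel_entropy_seq \<mu> \<nu> n - energy_seq lam \<nu> n)
      = (\<lambda>n. (energy_seq \<mu> \<nu> n - energy_seq lam \<nu> n)
        - block_entropy \<mu> (Lam n) / card (Lam n :: (int^('d::{finite,linorder})) set))"
    by (simp add: rel_entropy_seq_eq[OF prob_on_Omega_mu] algebra_simps)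
  then show ?thesis
    using tendsto_diff[OF energy_seq_diff_tendsto tendsto_ks_entropy[OF mu_inv]] by simp
qed

lemma convergent_rel_entropy_seq_iff: "convergent (rel_entropy_seq \<mu> \<nu>) \<longleftrightarrow> convergent (energy_seq lam \<nu>)"
  by (rule convergent_iff_if_diff_tendsto(1)[OF rel_entropy_seq_minus_energy_tendsto])

lemma rel_entropy_eq:
  "convergent (energy_seq lam \<nu>)
    \<Longrightarrow> rel_entropy \<mu> \<nu> = energy lam \<nu> + (- boundary_integral \<gamma> \<mu> lam - ks_entropy \<mu>)"
  unfolding rel_entropy_def energy_def
  by (rule convergent_iff_if_diff_tendsto(2)[OF rel_entropy_seq_minus_energy_tendsto])

lemma tendsto_ln_quotient_average:
  assumes gibbs_mu: "gibbs \<gamma> \<mu>" and conv: "convergent (energy_seq lam \<nu>)"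
  shows "(\<lambda>n. (\<integral>\<xi>. ln (measure \<mu> (cyl (Lam n) \<xi>) / measure \<nu> (cyl (Lam n) \<xi>)) \<partial>lam)
    / real (card (Lam n :: (int^('d::{finite,linorder})) set))) \<longlonglongrightarrow> rel_entropy \<mu> \<nu>"
proof -
  interpret self: rel_entropy_setting \<gamma> \<mu> \<mu> lam
    using spec nonnull gibbs_mu mu_inv lam_inv C1' by unfold_locales
  have quotient: "(\<integral>\<xi>. ln (measure \<mu> (cyl (Lam n) \<xi>) / measure \<nu> (cyl (Lam n) \<xi>)) \<partial>lam)
      / real (card (Lam n :: (int^('d::{finite,linorder})) set)) = energy_seq lam \<nu> n + (0 - energy_seq lam \<mu> n)" for n
  proof -
    have "(\<integral>\<xi>. ln (measure \<mu> (cyl (Lam n) \<xi>) / measure \<nu> (cyl (Lam n) \<xi>)) \<partial>lam)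
        = (\<integral>\<xi>. ln_cyl \<mu> (Lam n) \<xi> \<partial>lam) - (\<integral>\<xi>. ln_cyl \<nu> (Lam n) \<xi> \<partial>lam)"
      by (rule integral_ln_cyl_quotient[OF prob_on_Omega_lam finite_Lam
            self.cyl_measure_pos[OF finite_Lam] cyl_measure_pos[OF finite_Lam]])
    then show ?thesis by (simp add: energy_seq_def ln_cyl_def diff_divide_distrib)
  qed
  have "energy_seq lam \<nu> \<longlonglongrightarrow> energy lam \<nu>"
    using conv by (simp add: energy_def convergent_LIMSEQ_iff)
  from tendsto_add[OF this self.rel_entropy_seq_minus_energy_tendsto[unfolded rel_entropy_seq_self]]
  show ?thesis unfolding quotient rel_entropy_eq[OF conv] .
qed

end

theorem theorem3p9:
  fixes \<gamma> :: "(int^('d::{finite,linorder})) set \<Rightarrow> (int^('d::{finite,linorder}) \<Rightarrow> 'e::finite) \<Rightarrow> (int^('d::{finite,linorder}) \<Rightarrow> 'e) measure"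
    and \<nu> \<mu> lam :: "(int^('d::{finite,linorder}) \<Rightarrow> 'e) measure"
  assumes spec: "is_specification \<gamma>" and nonnull: "nonnull_spec \<gamma>" and tinv: "trans_inv_spec \<gamma>"
    and nu_gibbs: "gibbs \<gamma> \<nu>" and nu_inv: "inv_measure \<nu>"
    and mu_inv: "inv_measure \<mu>" and lam_inv: "inv_measure lam"
    and C1': "AE p in lam \<Otimes>\<^sub>M \<mu>. glue (snd p) (fst p) \<in> Omega_gamma \<gamma>"
  shows "(convergent (rel_entropy_seq \<mu> \<nu>) \<longleftrightarrow> convergent (energy_seq lam \<nu>))
    \<and> (convergent (rel_entropy_seq \<mu> \<nu>) \<longrightarrow>
         rel_entropy \<mu> \<nu> = - ks_entropy \<mu> + energy lam \<nu>
           - (\<integral>\<xi>. (\<integral>\<sigma>. ln (gamma0 \<gamma> (glue \<sigma> \<xi>) (glue \<sigma> \<xi>) / gamma0 \<gamma> \<xi> (glue \<sigma> \<xi>)) \<partial>\<mu>) \<partial>lam))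
    \<and> (gibbs \<gamma> \<mu> \<and> convergent (energy_seq lam \<nu>) \<longrightarrow>
         (\<lambda>n. (\<integral>\<xi>. ln (measure \<mu> (cyl (Lam n) \<xi>) / measure \<nu> (cyl (Lam n) \<xi>)) \<partial>lam)
               / real (card (Lam n :: (int^('d::{finite,linorder})) set)))
           \<longlonglongrightarrow> rel_entropy \<mu> \<nu>)"
proof -
  interpret rel_entropy_setting \<gamma> \<nu> \<mu> lam
    using assms by unfold_locales
  have "convergent (rel_entropy_seq \<mu> \<nu>) \<longrightarrow> rel_entropy \<mu> \<nu> = - ks_entropy \<mu> + energy lam \<nu>
      - (\<integral>\<xi>. (\<integral>\<sigma>. ln (gamma0 \<gamma> (glue \<sigma> \<xi>) (glue \<sigma> \<xi>) / gamma0 \<gamma> \<xi> (glue \<sigma> \<xi>)) \<partial>\<mu>) \<partial>lam)"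
    using rel_entropy_eq unfolding convergent_rel_entropy_seq_iff boundary_integral_def by simp
  moreover have "gibbs \<gamma> \<mu> \<and> convergent (energy_seq lam \<nu>) \<longrightarrow>
      (\<lambda>n. (\<integral>\<xi>. ln (measure \<mu> (cyl (Lam n) \<xi>) / measure \<nu> (cyl (Lam n) \<xi>)) \<partial>lam)
        / real (card (Lam n :: (int^('d::{finite,linorder})) set))) \<longlonglongrightarrow> rel_entropy \<mu> \<nu>"
    using tendsto_ln_quotient_average by blast
  ultimately show ?thesis using convergent_rel_entropy_seq_iff by blast
qed

end
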